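(* Let $(X,\mu)$ be a standard probability space, and let $\mu=\int\mu_\omega\,P(d\omega)$ for some probability space $(\Omega,P)$ and kernel $\omega\mapsto\mu_\omega$ from $\Omega$ to $X$. Let $\varepsilon\in(0,1/2)$, let $\Omega_1\subseteq\Omega$ be measurable with $P(\Omega_1)>1-\varepsilon/2$, and assume $I:=\int\mathrm{D}(\mu_\omega\|\mu)\,P(d\omega)<\infty$. Let $m:=\lceil16\varepsilon^{-2}e^{16(I+1)/\varepsilon}\rceil$. Then there are elements $\omega_1,\dots,\omega_m\in\Omega_1$, not necessarily distinct, such that $\big\|\frac1m\sum_{j=1}^m\mu_{\omega_j}-\mu\big\|<3\varepsilon$.
   Context: $\mathrm{D}$ is Kullback--Leibler divergence; $\|\cdot\|$ is the total variation norm of a signed measure (so $\|\mu-\nu\|\le 2$ for probability measures). *)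

theory Defs
  imports "HOL-Probability.Probability"
begin

text \<open>Kullback--Leibler divergence D(N || M) with values in [0, infinity]:
  infinity unless N is absolutely continuous w.r.t. M; otherwise the Lebesgue
  integral of f ln f (f = dN/dM) w.r.t. M, taken as positive part minus negative
  part (the negative part is bounded by 1/e, hence finite).\<close>
definition KL_div :: "'a measure \<Rightarrow> 'a measure \<Rightarrow> ennreal" where
  "KL_div N M =
     (if sets N = sets M \<and> absolutely_continuous M N then
        (let f = (\<lambda>x. enn2real (RN_deriv M N x)) in
          (\<integral>\<^sup>+ x. ennreal (f x * ln (f x)) \<partial>M) - (\<integral>\<^sup>+ x. ennreal (- (f x * ln (f x))) \<partial>M))
      else \<top>)"

definition tv_norm :: "'a measure \<Rightarrow> ('a set \<Rightarrow> real) \<Rightarrow> real" where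
  "tv_norm M \<nu> = Sup {(\<Sum>A\<in>\<A>. \<bar>\<nu> A\<bar>) | \<A>. finite \<A> \<and> \<A> \<subseteq> sets M \<and> disjoint \<A> \<and> \<Union>\<A> = space M}"

end

(*
  Since I < \<infinity>, \<mu>_\<omega> is absolutely continuous w.r.t. \<mu> for P-almost every \<omega>, and the densities
  can be chosen jointly measurable: \<mu>_\<omega> = H(\<omega>, \<cdot>) \<mu> for \<omega> in a set G of full measure.
  Truncating H at L = exp (8 (I + 1) / \<epsilon>) splits \<mu>_\<omega> into a part with density at most L and
  a tail. As \<integral> H ln H \<le> D(\<mu>_\<omega> \<parallel> \<mu>) + 1, the tail mass is at most (D(\<mu>_\<omega> \<parallel> \<mu>) + 1) / ln L,
  so its mean E under P conditioned on \<Omega>1 \<inter> G satisfies P(\<Omega>1 \<inter> G) E ln L \<le> I + 1.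

  The points are chosen greedily in \<Omega>1 \<inter> G: each new \<omega>_j keeps the squared L\<^sup>2(\<mu>)-norm of the
  sum of the centred bounded densities, plus c times the accumulated tail mass, no larger than
  its conditional mean, which grows by at most L\<^sup>2 + c E per step because the cross terms have
  mean zero. So the averaged bounded parts are within ((L\<^sup>2 + c E) / m)\<^sup>1\<^sup>/\<^sup>2 of their mean in
  L\<^sup>1(\<mu>), the tails cost at most L\<^sup>2 / c + 2 E, and the mass outside \<Omega>1 \<inter> G costs
  2 (1 - P(\<Omega>1 \<inter> G)) < \<epsilon>. With c = 6 L\<^sup>2 / \<epsilon> the total is below 3 \<epsilon>.
*)

theory Submission
  imports Defs
begin

section \<open>Greedy selection of sample points\<close>

lemma exists_le_integral:
  fixes F :: "'b \<Rightarrow> real"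
  assumes "prob_space Q" and "integrable Q F" and "AE \<omega> in Q. \<omega> \<in> S"
  shows "\<exists>\<omega>\<in>S. F \<omega> \<le> (\<integral>\<nu>. F \<nu> \<partial>Q)"
proof (rule ccontr)
  interpret prob_space Q by fact
  assume "\<not> ?thesis"
  with assms(3) have "AE \<omega> in Q. (\<integral>\<nu>. F \<nu> \<partial>Q) < F \<omega>" by (auto elim!: eventually_mono)
  then have "(\<integral>\<omega>. (\<integral>\<nu>. F \<nu> \<partial>Q) \<partial>Q) < (\<integral>\<omega>. F \<omega> \<partial>Q)"
    by (intro integral_less_AE_space assms(2)) (auto simp: emeasure_space_1)
  then show False by (simp add: prob_space)
qed

lemma integrable_bounded_square:
  fixes f :: "'a \<Rightarrow> real"
  assumes "finite_measure M" "f \<in> borel_measurable M" "\<And>x. \<bar>f x\<bar> \<le> B"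
  shows "integrable M (\<lambda>x. (f x)\<^sup>2)"
  using assms(1,2) power_mono[OF assms(3) abs_ge_zero, where n=2]
  by (intro finite_measure.integrable_const_bound[where B="B\<^sup>2"] AE_I2) auto

lemma integral_square_add_le:
  fixes D g :: "'a \<Rightarrow> real"
  assumes "prob_space M"
    and D[measurable]: "D \<in> borel_measurable M" and g[measurable]: "g \<in> borel_measurable M"
    and D_bounded: "\<And>x. \<bar>D x\<bar> \<le> B" and g_bounded: "\<And>x. \<bar>g x\<bar> \<le> L"
  shows "(\<integral>x. (D x + g x)\<^sup>2 \<partial>M) \<le> (\<integral>x. (D x)\<^sup>2 \<partial>M) + 2 * (\<integral>x. D x * g x \<partial>M) + L\<^sup>2"
proof -
  interpret prob_space M by fact
  have L: "0 \<le> L" using g_bounded[of undefined] by linarith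
  have B: "0 \<le> B" using D_bounded[of undefined] by linarith
  have D2: "integrable M (\<lambda>x. (D x)\<^sup>2)"
    by (rule integrable_bounded_square[OF finite_measure_axioms D D_bounded])
  have g2: "integrable M (\<lambda>x. (g x)\<^sup>2)"
    by (rule integrable_bounded_square[OF finite_measure_axioms g g_bounded])
  have "integrable M (\<lambda>x. 2 * (D x * g x))"
    unfolding abs_mult using mult_mono[OF D_bounded g_bounded B abs_ge_zero]
    by (intro integrable_mult_right integrable_const_bound[where B="B * L"] AE_I2) (simp_all add: abs_mult)
  then have "(\<integral>x. (D x)\<^sup>2 + 2 * (D x * g x) + (g x)\<^sup>2 \<partial>M)
      = (\<integral>x. (D x)\<^sup>2 \<partial>M) + 2 * (\<integral>x. D x * g x \<partial>M) + (\<integral>x. (g x)\<^sup>2 \<partial>M)"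
    using D2 g2 by simp
  moreover have "(\<lambda>x. (D x + g x)\<^sup>2) = (\<lambda>x. (D x)\<^sup>2 + 2 * (D x * g x) + (g x)\<^sup>2)"
    by (simp add: power2_sum algebra_simps)
  ultimately have "(\<integral>x. (D x + g x)\<^sup>2 \<partial>M) = (\<integral>x. (D x)\<^sup>2 \<partial>M) + 2 * (\<integral>x. D x * g x \<partial>M) + (\<integral>x. (g x)\<^sup>2 \<partial>M)"
    by (simp only:)
  also have "(\<integral>x. (g x)\<^sup>2 \<partial>M) \<le> (\<integral>x. L\<^sup>2 \<partial>M)"
    using g2 g_bounded L by (intro integral_mono) (auto simp: abs_le_square_iff[symmetric])
  finally show ?thesis by (simp add: prob_space)
qed

lemma integral_cross_term_centered:
  fixes Q :: "'b measure" and M :: "'a measure" and f :: "'b \<Rightarrow> 'a \<Rightarrow> real"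
  assumes "prob_space Q" and "prob_space M"
    and f_measurable[measurable]: "(\<lambda>z. f (fst z) (snd z)) \<in> borel_measurable (Q \<Otimes>\<^sub>M M)"
    and f_bounded: "\<And>\<omega> x. \<bar>f \<omega> x\<bar> \<le> L"
    and f_centered: "\<And>x. x \<in> space M \<Longrightarrow> (\<integral>\<omega>. f \<omega> x \<partial>Q) = 0"
    and D_measurable[measurable]: "D \<in> borel_measurable M" and D_bounded: "\<And>x. \<bar>D x\<bar> \<le> B"
  shows "integrable Q (\<lambda>\<nu>. \<integral>x. D x * f \<nu> x \<partial>M)" and "(\<integral>\<nu>. (\<integral>x. D x * f \<nu> x \<partial>M) \<partial>Q) = 0"
proof -
  interpret Q: prob_space Q by fact
  interpret M: prob_space M by fact
  interpret QM: pair_prob_space Q M by unfold_locales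
  have B: "0 \<le> B" using D_bounded[of undefined] by linarith
  have Df_bounded: "\<bar>D x * f \<nu> x\<bar> \<le> B * L" for \<nu> x
    unfolding abs_mult by (rule mult_mono[OF D_bounded f_bounded B abs_ge_zero])
  have Df: "integrable (Q \<Otimes>\<^sub>M M) (\<lambda>(\<nu>, x). D x * f \<nu> x)"
    by (rule QM.P.integrable_const_bound[where B="B * L"]) (auto intro!: AE_I2 Df_bounded)
  then show "integrable Q (\<lambda>\<nu>. \<integral>x. D x * f \<nu> x \<partial>M)"
    using QM.integrable_fst'[OF Df] by simp
  have "(\<integral>\<nu>. (\<integral>x. D x * f \<nu> x \<partial>M) \<partial>Q) = (\<integral>x. (\<integral>\<nu>. D x * f \<nu> x \<partial>Q) \<partial>M)"
    using QM.Fubini_integral[OF Df] by simp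
  also have "\<dots> = (\<integral>x. 0 \<partial>M)"
    by (intro Bochner_Integration.integral_cong) (simp_all add: f_centered)
  finally show "(\<integral>\<nu>. (\<integral>x. D x * f \<nu> x \<partial>M) \<partial>Q) = 0" by simp
qed

lemma greedy_step:
  fixes Q :: "'b measure" and M :: "'a measure" and f :: "'b \<Rightarrow> 'a \<Rightarrow> real" and \<tau> :: "'b \<Rightarrow> real"
  assumes "prob_space Q" and "prob_space M"
    and f_measurable[measurable]: "(\<lambda>z. f (fst z) (snd z)) \<in> borel_measurable (Q \<Otimes>\<^sub>M M)"
    and f_bounded: "\<And>\<omega> x. \<bar>f \<omega> x\<bar> \<le> L"
    and f_centered: "\<And>x. x \<in> space M \<Longrightarrow> (\<integral>\<omega>. f \<omega> x \<partial>Q) = 0"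
    and \<tau>[measurable]: "integrable Q \<tau>" and S: "AE \<omega> in Q. \<omega> \<in> S"
    and D_measurable[measurable]: "D \<in> borel_measurable M" and D_bounded: "\<And>x. \<bar>D x\<bar> \<le> B"
  shows "\<exists>\<nu>\<in>S. (\<integral>x. (D x + f \<nu> x)\<^sup>2 \<partial>M) + c * \<tau> \<nu>
           \<le> (\<integral>x. (D x)\<^sup>2 \<partial>M) + L\<^sup>2 + c * (\<integral>\<omega>. \<tau> \<omega> \<partial>Q)"
proof -
  \<comment> \<open>The cross term has mean zero under \<open>Q\<close>, so the \<open>Q\<close>-average of the objective is small,
    and some \<open>\<nu> \<in> S\<close> does at least as well as the average.\<close>
  interpret Q: prob_space Q by fact
  interpret M: prob_space M by fact
  have f_meas[measurable]: "f \<nu> \<in> borel_measurable M" if "\<nu> \<in> space Q" for \<nu>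
    using measurable_Pair2[OF f_measurable that] by simp
  define \<phi> where "\<phi> \<nu> = (\<integral>x. D x * f \<nu> x \<partial>M)" for \<nu>
  note \<phi> = integral_cross_term_centered[OF assms(1-5) D_measurable D_bounded, folded \<phi>_def]
  define F where "F \<nu> = (\<integral>x. (D x + f \<nu> x)\<^sup>2 \<partial>M) + c * \<tau> \<nu>" for \<nu>
  have F_le: "F \<nu> \<le> (\<integral>x. (D x)\<^sup>2 \<partial>M) + 2 * \<phi> \<nu> + L\<^sup>2 + c * \<tau> \<nu>" if "\<nu> \<in> space Q" for \<nu>
    using integral_square_add_le[OF M.prob_space_axioms D_measurable f_meas[OF that] D_bounded f_bounded]
    by (simp add: F_def \<phi>_def)
  have F_integrable: "integrable Q F"
  proof -
    have "\<bar>(D x + f \<nu> x)\<^sup>2\<bar> \<le> (B + L)\<^sup>2" for \<nu> x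
      using power_mono[OF abs_triangle_ineq[THEN order_trans, OF add_mono[OF D_bounded f_bounded]] abs_ge_zero,
          where n=2] by simp
    then have "\<bar>\<integral>x. (D x + f \<nu> x)\<^sup>2 \<partial>M\<bar> \<le> (\<integral>x. (B + L)\<^sup>2 \<partial>M)" for \<nu>
      by (intro order_trans[OF integral_abs_bound] integral_mono_AE' AE_I2) auto
    then have "\<bar>\<integral>x. (D x + f \<nu> x)\<^sup>2 \<partial>M\<bar> \<le> (B + L)\<^sup>2" for \<nu>
      by (simp add: M.prob_space)
    then have "integrable Q (\<lambda>\<nu>. \<integral>x. (D x + f \<nu> x)\<^sup>2 \<partial>M)"
      by (intro Q.integrable_const_bound[where B="(B + L)\<^sup>2"] AE_I2) auto
    then show ?thesis unfolding F_def using \<tau> by auto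
  qed
  obtain \<nu> where \<nu>: "\<nu> \<in> S" and "F \<nu> \<le> (\<integral>\<nu>. F \<nu> \<partial>Q)"
    using exists_le_integral[OF \<open>prob_space Q\<close> F_integrable S] by blast
  note this(2)
  also have "(\<integral>\<nu>. F \<nu> \<partial>Q) \<le> (\<integral>\<nu>. (\<integral>x. (D x)\<^sup>2 \<partial>M) + 2 * \<phi> \<nu> + L\<^sup>2 + c * \<tau> \<nu> \<partial>Q)"
    using F_le \<phi>(1) F_integrable \<tau> by (intro integral_mono) auto
  also have "\<dots> = (\<integral>x. (D x)\<^sup>2 \<partial>M) + L\<^sup>2 + c * (\<integral>\<nu>. \<tau> \<nu> \<partial>Q)"
    using \<phi> \<tau> by (simp add: Q.prob_space)
  finally show ?thesis using \<nu> unfolding F_def by blast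
qed

lemma greedy_selection:
  fixes Q :: "'b measure" and M :: "'a measure" and f :: "'b \<Rightarrow> 'a \<Rightarrow> real" and \<tau> :: "'b \<Rightarrow> real"
  assumes "prob_space Q" and "prob_space M"
    and f_measurable[measurable]: "(\<lambda>z. f (fst z) (snd z)) \<in> borel_measurable (Q \<Otimes>\<^sub>M M)"
    and f_bounded: "\<And>\<omega> x. \<bar>f \<omega> x\<bar> \<le> L"
    and f_centered: "\<And>x. x \<in> space M \<Longrightarrow> (\<integral>\<omega>. f \<omega> x \<partial>Q) = 0"
    and \<tau>: "integrable Q \<tau>" and S: "AE \<omega> in Q. \<omega> \<in> S" "S \<subseteq> space Q"
  shows "\<exists>\<omega>::nat\<Rightarrow>'b. (\<forall>j\<in>{1..k}. \<omega> j \<in> S) \<and>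
     (\<integral>x. (\<Sum>j=1..k. f (\<omega> j) x)\<^sup>2 \<partial>M) + c * (\<Sum>j=1..k. \<tau> (\<omega> j))
       \<le> real k * (L\<^sup>2 + c * (\<integral>\<omega>. \<tau> \<omega> \<partial>Q))"
proof (induction k)
  case (Suc k)
  then obtain \<omega> where \<omega>: "\<forall>j\<in>{1..k}. \<omega> j \<in> S" and
    IH: "(\<integral>x. (\<Sum>j=1..k. f (\<omega> j) x)\<^sup>2 \<partial>M) + c * (\<Sum>j=1..k. \<tau> (\<omega> j))
           \<le> real k * (L\<^sup>2 + c * (\<integral>\<omega>. \<tau> \<omega> \<partial>Q))"
    by blast
  have "f \<nu> \<in> borel_measurable M" if "\<nu> \<in> S" for \<nu>
    using measurable_Pair2[OF f_measurable subsetD[OF S(2) that]] by simp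
  then have "(\<lambda>x. \<Sum>j=1..k. f (\<omega> j) x) \<in> borel_measurable M"
    using \<omega> by (intro borel_measurable_sum) auto
  moreover have "\<bar>\<Sum>j=1..k. f (\<omega> j) x\<bar> \<le> real k * L" for x
  proof -
    have "\<bar>\<Sum>j=1..k. f (\<omega> j) x\<bar> \<le> (\<Sum>j=1..k. \<bar>f (\<omega> j) x\<bar>)" by (rule sum_abs)
    also have "\<dots> \<le> (\<Sum>j=1..k. L)" by (intro sum_mono f_bounded)
    finally show ?thesis by simp
  qed
  ultimately obtain \<nu> where "\<nu> \<in> S" and \<nu>:
    "(\<integral>x. ((\<Sum>j=1..k. f (\<omega> j) x) + f \<nu> x)\<^sup>2 \<partial>M) + c * \<tau> \<nu>
       \<le> (\<integral>x. (\<Sum>j=1..k. f (\<omega> j) x)\<^sup>2 \<partial>M) + L\<^sup>2 + c * (\<integral>\<omega>. \<tau> \<omega> \<partial>Q)"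
    using greedy_step[OF assms(1-5) \<tau> S(1)] by blast
  show ?case
  proof (intro exI conjI)
    show "\<forall>j\<in>{1..Suc k}. fun_upd \<omega> (Suc k) \<nu> j \<in> S" using \<omega> \<open>\<nu> \<in> S\<close> by auto
    show "(\<integral>x. (\<Sum>j=1..Suc k. f (fun_upd \<omega> (Suc k) \<nu> j) x)\<^sup>2 \<partial>M) + c * (\<Sum>j=1..Suc k. \<tau> (fun_upd \<omega> (Suc k) \<nu> j))
        \<le> real (Suc k) * (L\<^sup>2 + c * (\<integral>\<omega>. \<tau> \<omega> \<partial>Q))"
      using \<nu> IH by (simp add: sum.cl_ivl_Suc algebra_simps)
  qed
qed simp

lemma square_integral_abs_le_integral_square:
  fixes f :: "'a \<Rightarrow> real"
  assumes "prob_space M" "f \<in> borel_measurable M" "integrable M (\<lambda>x. (f x)\<^sup>2)" "integrable M f"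
  shows "(\<integral>x. \<bar>f x\<bar> \<partial>M)\<^sup>2 \<le> (\<integral>x. (f x)\<^sup>2 \<partial>M)"
proof -
  interpret prob_space M by fact
  have "0 \<le> variance (\<lambda>x. \<bar>f x\<bar>)" by (rule variance_positive)
  also have "variance (\<lambda>x. \<bar>f x\<bar>) = expectation (\<lambda>x. \<bar>f x\<bar>\<^sup>2) - (expectation (\<lambda>x. \<bar>f x\<bar>))\<^sup>2"
    using assms by (intro variance_eq) auto
  finally show ?thesis by simp
qed

section \<open>Partition sums and the total variation norm\<close>

definition partition_additive :: "'a measure \<Rightarrow> ('a set \<Rightarrow> real) \<Rightarrow> real \<Rightarrow> bool" where
  "partition_additive M \<beta> b \<longleftrightarrow>
     (\<forall>\<A>. finite \<A> \<and> \<A> \<subseteq> sets M \<and> disjoint \<A> \<and> \<Union>\<A> = space M \<longrightarrow> (\<Sum>A\<in>\<A>. \<beta> A) = b)"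

lemma partition_additive_cong_sets:
  assumes "sets N = sets M"
  shows "partition_additive N \<beta> b \<longleftrightarrow> partition_additive M \<beta> b"
  using assms sets_eq_imp_space_eq[OF assms] by (simp add: partition_additive_def)

lemma tv_norm_le_partition_additive:
  assumes "\<And>A. A \<in> sets M \<Longrightarrow> \<bar>\<nu> A\<bar> \<le> \<beta> A" and "partition_additive M \<beta> b"
  shows "tv_norm M \<nu> \<le> b"
  unfolding tv_norm_def
proof (rule cSup_least)
  show "{\<Sum>A\<in>\<A>. \<bar>\<nu> A\<bar> | \<A>. finite \<A> \<and> \<A> \<subseteq> sets M \<and> disjoint \<A> \<and> \<Union>\<A> = space M} \<noteq> {}"
    by (auto intro!: exI[of _ "{space M}"] simp: disjoint_def)
  show "s \<le> b" if "s \<in> {\<Sum>A\<in>\<A>. \<bar>\<nu> A\<bar> | \<A>. finite \<A> \<and> \<A> \<subseteq> sets M \<and> disjoint \<A> \<and> \<Union>\<A> = space M}" for s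
  proof -
    from that obtain \<A> where \<A>: "finite \<A>" "\<A> \<subseteq> sets M" "disjoint \<A>" "\<Union>\<A> = space M"
      and s: "s = (\<Sum>A\<in>\<A>. \<bar>\<nu> A\<bar>)" by blast
    have "(\<Sum>A\<in>\<A>. \<bar>\<nu> A\<bar>) \<le> (\<Sum>A\<in>\<A>. \<beta> A)" using \<A>(2) by (intro sum_mono assms(1)) auto
    also have "\<dots> = b" using assms(2) \<A> by (simp add: partition_additive_def)
    finally show ?thesis by (simp add: s)
  qed
qed

lemma partition_additive_add:
  "partition_additive M \<beta> b \<Longrightarrow> partition_additive M \<gamma> c \<Longrightarrow>
     partition_additive M (\<lambda>A. \<beta> A + \<gamma> A) (b + c)"
  by (simp add: partition_additive_def sum.distrib)

lemma partition_additive_cmult: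
  "partition_additive M \<beta> b \<Longrightarrow> partition_additive M (\<lambda>A. r * \<beta> A) (r * b)"
  by (simp add: partition_additive_def sum_distrib_left[symmetric])

lemma partition_additive_sum:
  assumes "\<And>i. i \<in> I \<Longrightarrow> partition_additive M (\<beta> i) (b i)"
  shows "partition_additive M (\<lambda>A. \<Sum>i\<in>I. \<beta> i A) (\<Sum>i\<in>I. b i)"
  unfolding partition_additive_def
proof safe
  fix \<A> assume "finite \<A>" "\<A> \<subseteq> sets M" "disjoint \<A>" "\<Union>\<A> = space M"
  then have "(\<Sum>A\<in>\<A>. \<beta> i A) = b i" if "i \<in> I" for i
    using assms[OF that] by (simp add: partition_additive_def)
  then show "(\<Sum>A\<in>\<A>. \<Sum>i\<in>I. \<beta> i A) = (\<Sum>i\<in>I. b i)"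
    by (subst sum.swap) (rule sum.cong, simp_all)
qed

lemma sum_indicator_partition:
  assumes "finite \<A>" "disjoint \<A>" "x \<in> \<Union>\<A>"
  shows "(\<Sum>A\<in>\<A>. indicator A x :: real) = 1"
proof -
  obtain A0 where A0: "A0 \<in> \<A>" "x \<in> A0" using assms(3) by auto
  have "(\<Sum>A\<in>\<A>. indicator A x :: real) = (\<Sum>A\<in>\<A>. if A = A0 then 1 else 0)"
    using A0 assms(2) by (intro sum.cong) (auto simp: indicator_def disjoint_def)
  also have "\<dots> = 1" using A0 assms(1) by simp
  finally show ?thesis .
qed

lemma partition_additive_set_integral:
  fixes \<phi> :: "'a \<Rightarrow> real"
  assumes "integrable M \<phi>"
  shows "partition_additive M (\<lambda>A. \<integral>x. indicator A x * \<phi> x \<partial>M) (\<integral>x. \<phi> x \<partial>M)"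
  unfolding partition_additive_def
proof safe
  fix \<A> assume \<A>: "finite \<A>" "\<A> \<subseteq> sets M" "disjoint \<A>" "\<Union>\<A> = space M"
  have "integrable M (\<lambda>x. indicator A x * \<phi> x)" if "A \<in> sets M" for A
    using integrable_real_mult_indicator[OF that assms] by (simp add: mult.commute)
  then have "(\<Sum>A\<in>\<A>. \<integral>x. indicator A x * \<phi> x \<partial>M) = (\<integral>x. (\<Sum>A\<in>\<A>. indicator A x * \<phi> x) \<partial>M)"
    using \<A>(2) by (intro Bochner_Integration.integral_sum[symmetric]) auto
  also have "\<dots> = (\<integral>x. \<phi> x \<partial>M)"
    using \<A> by (intro Bochner_Integration.integral_cong)
      (simp_all add: sum_distrib_right[symmetric] sum_indicator_partition)
  finally show "(\<Sum>A\<in>\<A>. \<integral>x. indicator A x * \<phi> x \<partial>M) = (\<integral>x. \<phi> x \<partial>M)" .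
qed

lemma partition_additive_prob_space:
  assumes "prob_space N" "sets N = sets M"
  shows "partition_additive M (measure N) 1"
proof -
  interpret prob_space N by fact
  have int: "partition_additive N (\<lambda>A. \<integral>x. indicator A x * 1 \<partial>N) (\<integral>x. 1 \<partial>N)"
    by (rule partition_additive_set_integral) simp
  have "partition_additive N (measure N) 1"
    unfolding partition_additive_def
  proof safe
    fix \<A> assume \<A>: "finite \<A>" "\<A> \<subseteq> sets N" "disjoint \<A>" "\<Union>\<A> = space N"
    have "(\<Sum>A\<in>\<A>. measure N A) = (\<Sum>A\<in>\<A>. \<integral>x. indicator A x * 1 \<partial>N)"
      using \<A>(2) by (intro sum.cong) auto
    also have "\<dots> = 1" using int \<A> by (simp add: partition_additive_def prob_space)
    finally show "(\<Sum>A\<in>\<A>. measure N A) = 1" .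
  qed
  then show ?thesis using partition_additive_cong_sets[OF assms(2)] by simp
qed

lemma partition_additive_integral:
  assumes "\<And>A. A \<in> sets M \<Longrightarrow> integrable Q (\<lambda>\<omega>. \<beta> \<omega> A)"
    and "AE \<omega> in Q. partition_additive M (\<beta> \<omega>) (b \<omega>)" and "b \<in> borel_measurable Q"
  shows "partition_additive M (\<lambda>A. \<integral>\<omega>. \<beta> \<omega> A \<partial>Q) (\<integral>\<omega>. b \<omega> \<partial>Q)"
  unfolding partition_additive_def
proof safe
  fix \<A> assume \<A>: "finite \<A>" "\<A> \<subseteq> sets M" "disjoint \<A>" "\<Union>\<A> = space M"
  have "(\<Sum>A\<in>\<A>. \<integral>\<omega>. \<beta> \<omega> A \<partial>Q) = (\<integral>\<omega>. (\<Sum>A\<in>\<A>. \<beta> \<omega> A) \<partial>Q)"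
    using \<A>(2) assms(1) by (intro Bochner_Integration.integral_sum[symmetric]) auto
  also have "\<dots> = (\<integral>\<omega>. b \<omega> \<partial>Q)"
    using assms(2)
  proof (intro integral_cong_AE)
    show "(\<lambda>\<omega>. \<Sum>A\<in>\<A>. \<beta> \<omega> A) \<in> borel_measurable Q"
      using \<A>(2) assms(1) by (intro borel_measurable_sum) auto
  qed (use \<A> assms(3) in \<open>auto simp: partition_additive_def elim!: eventually_mono\<close>)
  finally show "(\<Sum>A\<in>\<A>. \<integral>\<omega>. \<beta> \<omega> A \<partial>Q) = (\<integral>\<omega>. b \<omega> \<partial>Q)" .
qed

section \<open>Jointly measurable densities of a kernel\<close>

lemma borel_countable_Int_stable_generator:
  obtains E :: "'a::second_countable_topology set set" where "countable E" "Int_stable E" "UNIV \<in> E"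
    "sets (borel :: 'a measure) = sigma_sets UNIV E"
proof -
  obtain B :: "'a set set" where B: "countable B" "topological_basis B"
    using ex_countable_basis by blast
  define E where "E = Inter ` {S. finite S \<and> S \<subseteq> B}"
  have "countable E" unfolding E_def using countable_Collect_finite_subset[OF B(1)] by auto
  moreover have "Int_stable E"
    unfolding Int_stable_def E_def
  proof safe
    fix S T assume "finite S" "S \<subseteq> B" "finite T" "T \<subseteq> B"
    then show "\<Inter> S \<inter> \<Inter> T \<in> Inter ` {S. finite S \<and> S \<subseteq> B}"
      by (intro image_eqI[where x="S \<union> T"]) auto
  qed
  moreover have "UNIV \<in> E" unfolding E_def by (intro image_eqI[where x="{}"]) auto
  moreover have "sets (borel :: 'a measure) = sigma_sets UNIV E"
  proof
    have "sets (borel :: 'a measure) = sigma_sets UNIV B"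
      by (subst borel_eq_countable_basis[OF B]) simp
    also have "\<dots> \<subseteq> sigma_sets UNIV E"
      by (intro sigma_sets_subseteq) (force simp: E_def intro: image_eqI[where x="{_}"])
    finally show "sets (borel :: 'a measure) \<subseteq> sigma_sets UNIV E" .
    have "E \<subseteq> sets borel"
      unfolding E_def using topological_basis_open[OF B(2)] by (auto intro!: borel_open open_Inter)
    then show "sigma_sets UNIV E \<subseteq> sets (borel :: 'a measure)"
      using sets.sigma_sets_subset[of E borel] by simp
  qed
  ultimately show ?thesis using that by blast
qed

definition kernel_joint :: "'b measure \<Rightarrow> 'a measure \<Rightarrow> ('b \<Rightarrow> 'a measure) \<Rightarrow> ('b \<times> 'a) measure" where
  "kernel_joint P M K = P \<bind> (\<lambda>\<omega>. distr (K \<omega>) (P \<Otimes>\<^sub>M M) (Pair \<omega>))"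

lemma
  fixes M :: "'a measure" and P :: "'b measure" and K :: "'b \<Rightarrow> 'a measure"
  assumes P_prob: "prob_space P" and K_kernel: "K \<in> P \<rightarrow>\<^sub>M prob_algebra M"
  shows sets_kernel_joint: "sets (kernel_joint P M K) = sets (P \<Otimes>\<^sub>M M)"
    and emeasure_kernel_joint: "C \<in> sets (P \<Otimes>\<^sub>M M) \<Longrightarrow>
      emeasure (kernel_joint P M K) C = (\<integral>\<^sup>+\<omega>. emeasure (K \<omega>) (Pair \<omega> -` C) \<partial>P)"
proof -
  interpret P: prob_space P by fact
  have KS: "K \<in> P \<rightarrow>\<^sub>M subprob_algebra M" using K_kernel by (rule measurable_prob_algebraD)
  have sets_K: "sets (K \<omega>) = sets M" if "\<omega> \<in> space P" for \<omega>
    using measurable_space[OF K_kernel that] by (simp add: space_prob_algebra)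
  have kernel: "(\<lambda>\<omega>. distr (K \<omega>) (P \<Otimes>\<^sub>M M) (Pair \<omega>)) \<in> P \<rightarrow>\<^sub>M subprob_algebra (P \<Otimes>\<^sub>M M)"
    by (rule measurable_distr2[OF _ KS]) simp
  show "sets (kernel_joint P M K) = sets (P \<Otimes>\<^sub>M M)"
    unfolding kernel_joint_def by (rule sets_bind[OF _ P.not_empty]) simp
  assume C: "C \<in> sets (P \<Otimes>\<^sub>M M)"
  have Pair_measurable: "Pair \<omega> \<in> K \<omega> \<rightarrow>\<^sub>M P \<Otimes>\<^sub>M M" if "\<omega> \<in> space P" for \<omega>
    using measurable_Pair1'[OF that, of M] by (simp cong: measurable_cong_sets add: sets_K[OF that])
  have "Pair \<omega> -` C \<inter> space (K \<omega>) = Pair \<omega> -` C" if "\<omega> \<in> space P" for \<omega>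
    using sets.sets_into_space[OF C] sets_eq_imp_space_eq[OF sets_K[OF that]]
    by (auto simp: space_pair_measure)
  then show "emeasure (kernel_joint P M K) C = (\<integral>\<^sup>+\<omega>. emeasure (K \<omega>) (Pair \<omega> -` C) \<partial>P)"
    unfolding kernel_joint_def
    by (subst emeasure_bind[OF P.not_empty kernel C], intro nn_integral_cong)
       (simp add: emeasure_distr[OF Pair_measurable C])
qed

lemma absolutely_continuous_kernel_joint:
  fixes M :: "'a measure" and P :: "'b measure" and K :: "'b \<Rightarrow> 'a measure"
  assumes P_prob: "prob_space P" and K_kernel: "K \<in> P \<rightarrow>\<^sub>M prob_algebra M"
    and ac: "\<And>C. C \<in> null_sets (P \<Otimes>\<^sub>M M) \<Longrightarrow> AE \<omega> in P. emeasure (K \<omega>) (Pair \<omega> -` C) = 0"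
  shows "absolutely_continuous (P \<Otimes>\<^sub>M M) (kernel_joint P M K)"
  unfolding absolutely_continuous_def
proof
  fix C assume C: "C \<in> null_sets (P \<Otimes>\<^sub>M M)"
  then have C_sets[measurable]: "C \<in> sets (P \<Otimes>\<^sub>M M)" by auto
  have C_section: "Pair \<omega> -` C \<inter> space M = Pair \<omega> -` C" for \<omega>
    using sets.sets_into_space[OF C_sets] by (auto simp: space_pair_measure)
  have "(SIGMA \<omega>:space P. Pair \<omega> -` C \<inter> space M) = C"
    using sets.sets_into_space[OF C_sets] by (auto simp: space_pair_measure)
  moreover have "K \<in> P \<rightarrow>\<^sub>M subprob_algebra M" using K_kernel by (rule measurable_prob_algebraD)
  ultimately have "(\<lambda>\<omega>. emeasure (K \<omega>) (Pair \<omega> -` C)) \<in> borel_measurable P"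
    using emeasure_measurable_subprob_algebra2[of P "\<lambda>\<omega>. Pair \<omega> -` C" M K] by (simp add: C_section)
  then have "(\<integral>\<^sup>+\<omega>. emeasure (K \<omega>) (Pair \<omega> -` C) \<partial>P) = 0"
    using ac[OF C] by (subst nn_integral_0_iff_AE) auto
  then show "C \<in> null_sets (kernel_joint P M K)"
    using emeasure_kernel_joint[OF P_prob K_kernel C_sets] sets_kernel_joint[OF P_prob K_kernel]
    by (auto simp: null_sets_def)
qed

lemma kernel_AE_emeasure_eq_density:
  fixes M :: "'a measure" and P :: "'b measure" and K :: "'b \<Rightarrow> 'a measure"
  assumes P_prob: "prob_space P" and M_prob: "prob_space M"
    and K_kernel: "K \<in> P \<rightarrow>\<^sub>M prob_algebra M"
    and ac: "\<And>C. C \<in> null_sets (P \<Otimes>\<^sub>M M) \<Longrightarrow> AE \<omega> in P. emeasure (K \<omega>) (Pair \<omega> -` C) = 0"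
  obtains h where "h \<in> borel_measurable (P \<Otimes>\<^sub>M M)"
    and "\<And>B. B \<in> sets M \<Longrightarrow> AE \<omega> in P. emeasure (K \<omega>) B = (\<integral>\<^sup>+x. h (\<omega>, x) * indicator B x \<partial>M)"
proof -
  interpret P: prob_space P by fact
  interpret M: prob_space M by fact
  interpret PM: pair_prob_space P M by unfold_locales
  have [measurable]: "K \<in> P \<rightarrow>\<^sub>M subprob_algebra M" using K_kernel by (rule measurable_prob_algebraD)
  define h where "h = RN_deriv (P \<Otimes>\<^sub>M M) (kernel_joint P M K)"
  have h_measurable[measurable]: "h \<in> borel_measurable (P \<Otimes>\<^sub>M M)" unfolding h_def by simp
  have joint_density: "density (P \<Otimes>\<^sub>M M) h = kernel_joint P M K"
    unfolding h_def using absolutely_continuous_kernel_joint[OF P_prob K_kernel ac]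
      sets_kernel_joint[OF P_prob K_kernel] by (intro PM.density_RN_deriv) auto
  have "AE \<omega> in P. emeasure (K \<omega>) B = (\<integral>\<^sup>+x. h (\<omega>, x) * indicator B x \<partial>M)"
    if B[measurable]: "B \<in> sets M" for B
  proof (rule P.density_unique_finite_measure)
    fix A assume A[measurable]: "A \<in> sets P"
    have "Pair \<omega> -` (A \<times> B) = (if \<omega> \<in> A then B else {})" for \<omega> by auto
    then have "(\<integral>\<^sup>+\<omega>. emeasure (K \<omega>) B * indicator A \<omega> \<partial>P) = emeasure (kernel_joint P M K) (A \<times> B)"
      by (subst emeasure_kernel_joint[OF P_prob K_kernel])
         (auto intro!: nn_integral_cong split: split_indicator)
    also have "\<dots> = (\<integral>\<^sup>+z. h z * indicator (A \<times> B) z \<partial>(P \<Otimes>\<^sub>M M))"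
      by (simp add: joint_density[symmetric] emeasure_density)
    also have "\<dots> = (\<integral>\<^sup>+\<omega>. (\<integral>\<^sup>+x. h (\<omega>, x) * indicator (A \<times> B) (\<omega>, x) \<partial>M) \<partial>P)"
      by (rule M.nn_integral_fst[symmetric]) simp
    also have "\<dots> = (\<integral>\<^sup>+\<omega>. (\<integral>\<^sup>+x. h (\<omega>, x) * indicator B x \<partial>M) * indicator A \<omega> \<partial>P)"
      by (intro nn_integral_cong) (auto split: split_indicator simp: indicator_times)
    finally show "(\<integral>\<^sup>+\<omega>. emeasure (K \<omega>) B * indicator A \<omega> \<partial>P)
        = (\<integral>\<^sup>+\<omega>. (\<integral>\<^sup>+x. h (\<omega>, x) * indicator B x \<partial>M) * indicator A \<omega> \<partial>P)" .
  qed auto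
  with h_measurable show ?thesis by (rule that)
qed

lemma density_ennreal_enn2real:
  assumes "h \<in> borel_measurable M" "emeasure (density M h) (space M) \<noteq> \<infinity>"
  shows "density M (\<lambda>x. ennreal (enn2real (h x))) = density M h"
proof -
  have "(\<integral>\<^sup>+x. h x \<partial>M) \<noteq> \<infinity>" using assms by (simp add: emeasure_density)
  then have "AE x in M. h x \<noteq> \<infinity>" using assms(1) by (intro nn_integral_PInf_AE) auto
  then have "AE x in M. ennreal (enn2real (h x)) = h x"
    by eventually_elim (simp add: less_top[symmetric])
  then show ?thesis using assms(1) by (intro density_cong) auto
qed

lemma kernel_AE_eq_density:
  fixes M :: "'a::second_countable_topology measure" and P :: "'b measure" and K :: "'b \<Rightarrow> 'a measure"
  assumes M_borel: "sets M = sets borel" and K_kernel: "K \<in> P \<rightarrow>\<^sub>M prob_algebra M"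
    and h_measurable[measurable]: "h \<in> borel_measurable (P \<Otimes>\<^sub>M M)"
    and h: "\<And>B. B \<in> sets M \<Longrightarrow> AE \<omega> in P. emeasure (K \<omega>) B = (\<integral>\<^sup>+x. h (\<omega>, x) * indicator B x \<partial>M)"
  shows "AE \<omega> in P. K \<omega> = density M (\<lambda>x. h (\<omega>, x))"
proof -
  obtain E :: "'a set set" where E: "countable E" "Int_stable E" "UNIV \<in> E"
      "sets (borel :: 'a measure) = sigma_sets UNIV E"
    by (rule borel_countable_Int_stable_generator)
  have E_sets: "e \<in> sets M" if "e \<in> E" for e using that E(4) M_borel by auto
  have "AE \<omega> in P. \<forall>e\<in>E. emeasure (K \<omega>) e = (\<integral>\<^sup>+x. h (\<omega>, x) * indicator e x \<partial>M)"
    using E(1) by (subst AE_ball_countable) (auto intro!: h E_sets)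
  with AE_space show ?thesis
  proof eventually_elim
    case (elim \<omega>)
    then have K: "sets (K \<omega>) = sets borel" "prob_space (K \<omega>)"
      using measurable_space[OF K_kernel] M_borel by (auto simp: space_prob_algebra)
    then have "emeasure (K \<omega>) UNIV = 1"
      using prob_space.emeasure_space_1 sets_eq_imp_space_eq[OF K(1)] by fastforce
    then show ?case
      using elim M_borel E E_sets K(1)
      by (intro measure_eqI_generator_eq[where E=E and \<Omega>=UNIV and A="\<lambda>_. UNIV"])
        (auto simp: emeasure_density)
  qed
qed

lemma kernel_density_exists:
  fixes M :: "'a::second_countable_topology measure" and P :: "'b measure" and K :: "'b \<Rightarrow> 'a measure"
  assumes M_borel: "sets M = sets borel" and P_prob: "prob_space P" and M_prob: "prob_space M"
    and K_kernel: "K \<in> P \<rightarrow>\<^sub>M prob_algebra M"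
    and ac: "\<And>C. C \<in> null_sets (P \<Otimes>\<^sub>M M) \<Longrightarrow> AE \<omega> in P. emeasure (K \<omega>) (Pair \<omega> -` C) = 0"
  obtains H G where "H \<in> borel_measurable (P \<Otimes>\<^sub>M M)" and "\<And>z. 0 \<le> H z"
    and "G \<in> sets P" and "emeasure P G = 1"
    and "\<And>\<omega>. \<omega> \<in> G \<Longrightarrow> K \<omega> = density M (\<lambda>x. ennreal (H (\<omega>, x)))"
proof -
  interpret P: prob_space P by fact
  obtain h where h_measurable[measurable]: "h \<in> borel_measurable (P \<Otimes>\<^sub>M M)"
    and h: "\<And>B. B \<in> sets M \<Longrightarrow> AE \<omega> in P. emeasure (K \<omega>) B = (\<integral>\<^sup>+x. h (\<omega>, x) * indicator B x \<partial>M)"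
    using kernel_AE_emeasure_eq_density[OF P_prob M_prob K_kernel ac] by blast
  from kernel_AE_eq_density[OF M_borel K_kernel h_measurable h]
  obtain N where N: "{\<omega>\<in>space P. K \<omega> \<noteq> density M (\<lambda>x. h (\<omega>, x))} \<subseteq> N" "N \<in> null_sets P"
    by (rule AE_E) auto
  define G where "G = space P - N"
  have G_sets: "G \<in> sets P" using N by (auto simp: G_def)
  have G_full: "emeasure P G = 1"
    unfolding G_def using N by (subst emeasure_compl) (auto simp: P.emeasure_space_1)
  define H where "H z = enn2real (h z)" for z
  have "K \<omega> = density M (\<lambda>x. ennreal (H (\<omega>, x)))" if \<omega>: "\<omega> \<in> G" for \<omega>
  proof -
    have \<omega>_space: "\<omega> \<in> space P" and K_\<omega>: "K \<omega> = density M (\<lambda>x. h (\<omega>, x))"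
      using \<omega> N(1) by (auto simp: G_def)
    have "prob_space (K \<omega>)" using measurable_space[OF K_kernel \<omega>_space] by (simp add: space_prob_algebra)
    then have "emeasure (density M (\<lambda>x. h (\<omega>, x))) (space M) \<noteq> \<infinity>"
      using prob_space.emeasure_space_1 unfolding K_\<omega> by fastforce
    then show ?thesis
      unfolding H_def K_\<omega> using \<omega>_space by (subst density_ennreal_enn2real) auto
  qed
  moreover have "H \<in> borel_measurable (P \<Otimes>\<^sub>M M)" unfolding H_def by measurable
  moreover have "0 \<le> H z" for z by (simp add: H_def)
  ultimately show ?thesis using G_sets G_full that by blast
qed

section \<open>Kullback--Leibler divergence and tails of densities\<close>

lemma absolutely_continuous_if_KL_div_finite:
  "KL_div N M \<noteq> \<top> \<Longrightarrow> absolutely_continuous M N"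
  by (auto simp: KL_div_def split: if_splits)

lemma AE_kernel_null_section_of_finite_KL:
  fixes M :: "'a measure" and P :: "'b measure" and K :: "'b \<Rightarrow> 'a measure"
  assumes M_prob: "prob_space M" and K_kernel: "K \<in> P \<rightarrow>\<^sub>M prob_algebra M"
    and I_fin: "(\<integral>\<^sup>+ \<omega>. KL_div (K \<omega>) M \<partial>P) < \<top>"
    and C: "C \<in> null_sets (P \<Otimes>\<^sub>M M)"
  shows "AE \<omega> in P. emeasure (K \<omega>) (Pair \<omega> -` C) = 0"
proof -
  interpret M: prob_space M by fact
  have KS: "K \<in> P \<rightarrow>\<^sub>M subprob_algebra M" using K_kernel by (rule measurable_prob_algebraD)
  have Cs[measurable]: "C \<in> sets (P \<Otimes>\<^sub>M M)" and C0: "emeasure (P \<Otimes>\<^sub>M M) C = 0" using C by auto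
  have sub: "Pair \<omega> -` C \<inter> space M = Pair \<omega> -` C" for \<omega>
    using sets.sets_into_space[OF Cs] by (auto simp: space_pair_measure)
  have Sig: "(SIGMA \<omega>:space P. Pair \<omega> -` C \<inter> space M) = C"
    using sets.sets_into_space[OF Cs] by (auto simp: space_pair_measure)
  have [measurable]: "(\<lambda>\<omega>. emeasure (K \<omega>) (Pair \<omega> -` C \<inter> space M)) \<in> borel_measurable P"
    by (rule emeasure_measurable_subprob_algebra2[OF _ KS]) (simp only: Sig Cs)
  have [measurable]: "(\<lambda>\<omega>. emeasure M (Pair \<omega> -` C)) \<in> borel_measurable P"
    by (rule M.measurable_emeasure_Pair[OF Cs])
  have AEM: "AE \<omega> in P. emeasure M (Pair \<omega> -` C) = 0"
    using C0 unfolding M.emeasure_pair_measure_alt[OF Cs] by (subst (asm) nn_integral_0_iff_AE) auto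
  \<comment> \<open>On \<open>Y\<close> the divergence is infinite, so finiteness of its integral makes \<open>Y\<close> null.\<close>
  define Y where "Y = {\<omega>\<in>space P. emeasure (K \<omega>) (Pair \<omega> -` C \<inter> space M) \<noteq> 0 \<and> emeasure M (Pair \<omega> -` C) = 0}"
  have Ys: "Y \<in> sets P" unfolding Y_def by measurable
  have KLY: "KL_div (K \<omega>) M = \<top>" if "\<omega> \<in> Y" for \<omega>
  proof (rule ccontr)
    assume "KL_div (K \<omega>) M \<noteq> \<top>"
    then have "absolutely_continuous M (K \<omega>)" by (rule absolutely_continuous_if_KL_div_finite)
    moreover have "Pair \<omega> -` C \<in> null_sets M" using that by (auto simp: Y_def)
    ultimately have "Pair \<omega> -` C \<in> null_sets (K \<omega>)" by (auto simp: absolutely_continuous_def)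
    then show False using that by (auto simp: Y_def sub)
  qed
  have "(\<integral>\<^sup>+\<omega>. \<top> * indicator Y \<omega> \<partial>P) \<le> (\<integral>\<^sup>+ \<omega>. KL_div (K \<omega>) M \<partial>P)"
    by (intro nn_integral_mono) (auto split: split_indicator simp: KLY)
  also have "\<dots> < \<top>" by (rule I_fin)
  finally have "\<top> * emeasure P Y < \<top>" using Ys by (subst (asm) nn_integral_cmult_indicator) auto
  then have "emeasure P Y = 0" by (auto simp: ennreal_mult_less_top)
  then have "AE \<omega> in P. \<omega> \<notin> Y" using Ys by (intro AE_not_in) auto
  then show ?thesis using AEM AE_space
  proof eventually_elim
    case (elim \<omega>) then show ?case by (auto simp: Y_def sub)
  qed
qed

lemma neg_mult_ln_le_one:
  fixes x :: real
  assumes "0 \<le> x"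
  shows "- (x * ln x) \<le> 1"
proof (cases "x = 0")
  case False
  then have x: "0 < x" using assms by simp
  have "ln (1 / x) \<le> 1 / x - 1" using x by (intro ln_le_minus_one) simp
  then have "x * (- ln x) \<le> x * (1 / x - 1)" using x by (intro mult_left_mono) (auto simp: ln_div)
  then show ?thesis using x by (simp add: algebra_simps)
qed simp

lemma KL_div_density:
  fixes H :: "'a \<Rightarrow> real"
  assumes "sigma_finite_measure M" "H \<in> borel_measurable M" "\<And>x. 0 \<le> H x"
  shows "KL_div (density M (\<lambda>x. ennreal (H x))) M
    = (\<integral>\<^sup>+x. ennreal (H x * ln (H x)) \<partial>M) - (\<integral>\<^sup>+x. ennreal (- (H x * ln (H x))) \<partial>M)"
proof -
  interpret sigma_finite_measure M by fact
  let ?N = "density M (\<lambda>x. ennreal (H x))"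
  have "AE x in M. ennreal (H x) = RN_deriv M ?N x"
    using assms(2) by (intro RN_deriv_unique) auto
  then have AEH: "AE x in M. enn2real (RN_deriv M ?N x) = H x"
    by eventually_elim (use assms(3) in \<open>metis enn2real_ennreal\<close>)
  have "absolutely_continuous M ?N"
    using assms(2) by (intro absolutely_continuousI_density) measurable
  then have "KL_div ?N M
    = (\<integral>\<^sup>+x. ennreal (enn2real (RN_deriv M ?N x) * ln (enn2real (RN_deriv M ?N x))) \<partial>M)
      - (\<integral>\<^sup>+x. ennreal (- (enn2real (RN_deriv M ?N x) * ln (enn2real (RN_deriv M ?N x)))) \<partial>M)"
    by (simp add: KL_div_def Let_def)
  also have "\<dots> = (\<integral>\<^sup>+x. ennreal (H x * ln (H x)) \<partial>M) - (\<integral>\<^sup>+x. ennreal (- (H x * ln (H x))) \<partial>M)"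
    by (intro arg_cong2[where f="(-)"] nn_integral_cong_AE; use AEH in \<open>eventually_elim\<close>) simp_all
  finally show ?thesis .
qed

lemma tail_integral_ln_le_KL_div:
  fixes H :: "'a \<Rightarrow> real"
  assumes "prob_space M" and H[measurable]: "H \<in> borel_measurable M" and H0: "\<And>x. 0 \<le> H x"
    and "integrable M H" and L: "1 < L"
  shows "ennreal ((\<integral>x. (if L < H x then H x else 0) \<partial>M) * ln L)
    \<le> KL_div (density M (\<lambda>x. ennreal (H x))) M + 1"
proof -
  interpret prob_space M by fact
  define A where "A = (\<integral>\<^sup>+x. ennreal (H x * ln (H x)) \<partial>M)"
  define B where "B = (\<integral>\<^sup>+x. ennreal (- (H x * ln (H x))) \<partial>M)"
  have "- (H x * ln (H x)) \<le> 1" for x by (rule neg_mult_ln_le_one[OF H0])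
  then have "B \<le> (\<integral>\<^sup>+x. 1 \<partial>M)" unfolding B_def
    by (intro nn_integral_mono) (simp add: ennreal_le_1)
  then have B: "B \<le> 1" by (simp add: emeasure_space_1)
  define r where "r x = (if L < H x then H x else 0)" for x
  have [measurable]: "r \<in> borel_measurable M" unfolding r_def by measurable
  have "integrable M r"
    by (rule Bochner_Integration.integrable_bound[OF assms(4)]) (auto simp: r_def H0 intro!: AE_I2)
  moreover have "0 \<le> r x * ln L" for x using L by (simp add: r_def H0)
  ultimately have "ennreal ((\<integral>x. r x \<partial>M) * ln L) = (\<integral>\<^sup>+x. ennreal (r x * ln L) \<partial>M)"
    by (subst nn_integral_eq_integral) auto
  also have "\<dots> \<le> A"
  proof -
    have "ennreal (r x * ln L) \<le> ennreal (H x * ln (H x))" for x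
    proof (cases "L < H x")
      case True
      then show ?thesis using L by (auto simp: r_def intro!: ennreal_leI mult_left_mono)
    qed (simp add: r_def)
    then show ?thesis unfolding A_def by (intro nn_integral_mono)
  qed
  also have "A \<le> (A - B) + B"
    by (cases "B \<le> A") (auto simp: diff_add_cancel_ennreal add_increasing intro: order_trans[of A B])
  also have "\<dots> \<le> KL_div (density M (\<lambda>x. ennreal (H x))) M + 1"
    unfolding KL_div_density[OF sigma_finite_measure_axioms H H0] A_def[symmetric] B_def[symmetric]
    using B by (intro add_left_mono)
  finally show ?thesis unfolding r_def .
qed

lemma nn_integral_le_add_one:
  assumes "prob_space P" and \<phi>[measurable]: "\<phi> \<in> borel_measurable P" and le: "\<And>\<omega>. \<phi> \<omega> \<le> g \<omega> + 1"
  shows "(\<integral>\<^sup>+\<omega>. \<phi> \<omega> \<partial>P) \<le> (\<integral>\<^sup>+\<omega>. g \<omega> \<partial>P) + 1"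
proof -
  interpret prob_space P by fact
  \<comment> \<open>\<open>g\<close> need not be measurable, so \<open>nn_integral_add\<close> is applied to \<open>\<phi> - 1\<close> instead.\<close>
  have "\<phi> \<omega> \<le> (\<phi> \<omega> - 1) + 1" for \<omega>
    by (cases "1 \<le> \<phi> \<omega>") (simp_all add: diff_add_cancel_ennreal add_increasing)
  then have "(\<integral>\<^sup>+\<omega>. \<phi> \<omega> \<partial>P) \<le> (\<integral>\<^sup>+\<omega>. (\<phi> \<omega> - 1) + 1 \<partial>P)"
    by (intro nn_integral_mono)
  also have "\<dots> = (\<integral>\<^sup>+\<omega>. (\<phi> \<omega> - 1) \<partial>P) + 1"
    by (subst nn_integral_add) (auto simp: emeasure_space_1)
  also have "\<phi> \<omega> - 1 \<le> g \<omega>" for \<omega>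
    using ennreal_minus_mono[OF le order_refl, of \<omega> 1] by simp
  then have "(\<integral>\<^sup>+\<omega>. (\<phi> \<omega> - 1) \<partial>P) + 1 \<le> (\<integral>\<^sup>+\<omega>. g \<omega> \<partial>P) + 1"
    by (intro add_right_mono nn_integral_mono)
  finally show ?thesis .
qed

section \<open>Mixtures with a kernel density\<close>

locale kernel_density =
  fixes P :: "'b measure" and M :: "'a measure" and K :: "'b \<Rightarrow> 'a measure"
    and H :: "'b \<times> 'a \<Rightarrow> real" and G :: "'b set"
  assumes P_prob: "prob_space P" and M_prob: "prob_space M"
    and K_kernel: "K \<in> P \<rightarrow>\<^sub>M prob_algebra M" and M_mix: "M = P \<bind> K"
    and H_measurable[measurable]: "H \<in> borel_measurable (P \<Otimes>\<^sub>M M)" and H_nonneg: "\<And>z. 0 \<le> H z"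
    and G_sets[measurable]: "G \<in> sets P" and G_full: "emeasure P G = 1"
    and K_density: "\<And>\<omega>. \<omega> \<in> G \<Longrightarrow> K \<omega> = density M (\<lambda>x. ennreal (H (\<omega>, x)))"
begin

sublocale P: prob_space P by (rule P_prob)
sublocale M: prob_space M by (rule M_prob)

lemma K_measurable[measurable]: "K \<in> P \<rightarrow>\<^sub>M subprob_algebra M"
  using K_kernel by (rule measurable_prob_algebraD)

lemma
  assumes "\<omega> \<in> space P"
  shows sets_K: "sets (K \<omega>) = sets M" and prob_space_K: "prob_space (K \<omega>)"
  using measurable_space[OF K_kernel assms] by (auto simp: space_prob_algebra)

lemma space_K: "\<omega> \<in> space P \<Longrightarrow> space (K \<omega>) = space M"
  by (rule sets_eq_imp_space_eq[OF sets_K])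

lemma G_subset_space: "G \<subseteq> space P"
  using sets.sets_into_space[OF G_sets] .

lemma measure_K_bounds: "\<omega> \<in> space P \<Longrightarrow> 0 \<le> measure (K \<omega>) A \<and> measure (K \<omega>) A \<le> 1"
  using prob_space.prob_le_1[OF prob_space_K] by simp

lemma integrable_measure_K:
  assumes "finite_measure N" "sets N = sets P" "A \<in> sets M"
  shows "integrable N (\<lambda>\<omega>. measure (K \<omega>) A)"
proof -
  have "(\<lambda>\<omega>. measure (K \<omega>) A) \<in> borel_measurable P" using assms(3) by measurable
  then have "(\<lambda>\<omega>. measure (K \<omega>) A) \<in> borel_measurable N"
    by (simp add: measurable_cong_sets[OF assms(2) refl])
  then show ?thesis
    using measure_K_bounds sets_eq_imp_space_eq[OF assms(2)]
    by (intro finite_measure.integrable_const_bound[OF assms(1), where B=1] AE_I2) auto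
qed

lemma measure_M_eq_integral:
  assumes A: "A \<in> sets M"
  shows "measure M A = (\<integral>\<omega>. measure (K \<omega>) A \<partial>P)"
proof -
  have "emeasure M A = emeasure (P \<bind> K) A" using M_mix by simp
  also have "\<dots> = (\<integral>\<^sup>+\<omega>. emeasure (K \<omega>) A \<partial>P)"
    using A sets_K by (intro emeasure_bind[OF P.not_empty K_measurable]) auto
  also have "\<dots> = (\<integral>\<^sup>+\<omega>. ennreal (measure (K \<omega>) A) \<partial>P)"
    using prob_space_K
    by (intro nn_integral_cong) (simp add: finite_measure.emeasure_eq_measure[OF prob_space.finite_measure])
  also have "\<dots> = ennreal (\<integral>\<omega>. measure (K \<omega>) A \<partial>P)"
    using integrable_measure_K[OF P.finite_measure_axioms refl A] measure_K_bounds
    by (intro nn_integral_eq_integral) (auto intro!: AE_I2)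
  finally show ?thesis
    using measure_K_bounds by (simp add: M.emeasure_eq_measure integral_nonneg_AE)
qed

lemma integrable_H:
  assumes "\<omega> \<in> G"
  shows "integrable M (\<lambda>x. H (\<omega>, x))"
proof -
  have \<omega>: "\<omega> \<in> space P" using assms G_subset_space by auto
  have "(\<integral>\<^sup>+x. ennreal (H (\<omega>, x)) \<partial>M) = emeasure (K \<omega>) (space M)"
    using \<omega> by (simp add: K_density[OF assms] emeasure_density)
  also have "\<dots> = 1" using prob_space.emeasure_space_1[OF prob_space_K[OF \<omega>]] space_K[OF \<omega>] by simp
  finally show ?thesis using \<omega> H_nonneg by (intro integrableI_nonneg) auto
qed

lemma measure_K_eq_set_integral:
  assumes "\<omega> \<in> G" "A \<in> sets M"
  shows "measure (K \<omega>) A = (\<integral>x. indicator A x * H (\<omega>, x) \<partial>M)"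
proof -
  have \<omega>: "\<omega> \<in> space P" using assms G_subset_space by auto
  have int: "integrable M (\<lambda>x. indicator A x * H (\<omega>, x))"
    using integrable_real_mult_indicator[OF assms(2) integrable_H[OF assms(1)]]
    by (simp add: mult.commute)
  have "emeasure (K \<omega>) A = (\<integral>\<^sup>+x. ennreal (H (\<omega>, x)) * indicator A x \<partial>M)"
    using assms \<omega> by (simp add: K_density emeasure_density)
  also have "\<dots> = (\<integral>\<^sup>+x. ennreal (indicator A x * H (\<omega>, x)) \<partial>M)"
    by (intro nn_integral_cong) (simp split: split_indicator)
  also have "\<dots> = ennreal (\<integral>x. indicator A x * H (\<omega>, x) \<partial>M)"
    using int H_nonneg by (intro nn_integral_eq_integral) auto
  finally show ?thesis
    using H_nonneg by (simp add: measure_def integral_nonneg_AE)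
qed

lemma partition_additive_integral_measure_K:
  assumes "finite_measure N" "sets N = sets P"
  shows "partition_additive M (\<lambda>A. \<integral>\<eta>. measure (K \<eta>) A \<partial>N) (measure N (space N))"
proof -
  have "partition_additive M (\<lambda>A. \<integral>\<eta>. measure (K \<eta>) A \<partial>N) (\<integral>\<eta>. 1 \<partial>N)"
    using assms sets_K prob_space_K sets_eq_imp_space_eq[OF assms(2)]
    by (intro partition_additive_integral integrable_measure_K AE_I2)
      (auto intro: partition_additive_prob_space)
  then show ?thesis by simp
qed

lemma partition_additive_set_integral_measure_K:
  assumes T: "T \<in> sets P"
  shows "partition_additive M (\<lambda>A. \<integral>\<eta>. indicator T \<eta> * measure (K \<eta>) A \<partial>P) (measure P T)"
proof -
  have "partition_additive M (\<lambda>A. \<integral>\<eta>. indicator T \<eta> * measure (K \<eta>) A \<partial>P) (\<integral>\<eta>. indicator T \<eta> * 1 \<partial>P)"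
  proof (intro partition_additive_integral partition_additive_cmult AE_I2)
    show "integrable P (\<lambda>\<eta>. indicator T \<eta> * measure (K \<eta>) A)" if "A \<in> sets M" for A
      using integrable_real_mult_indicator[OF T integrable_measure_K[OF P.finite_measure_axioms refl that]]
      by (simp add: mult.commute)
  qed (use T sets_K prob_space_K in \<open>auto intro: partition_additive_prob_space\<close>)
  then show ?thesis using T by simp
qed

definition bulk :: "real \<Rightarrow> 'b \<times> 'a \<Rightarrow> real" where
  "bulk L z = (if H z \<le> L then H z else 0)"

definition tail :: "real \<Rightarrow> 'b \<times> 'a \<Rightarrow> real" where
  "tail L z = (if L < H z then H z else 0)"

definition tail_mass :: "real \<Rightarrow> 'b \<Rightarrow> real" where
  "tail_mass L \<omega> = (\<integral>x. tail L (\<omega>, x) \<partial>M)"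

lemma bulk_measurable[measurable]: "bulk L \<in> borel_measurable (P \<Otimes>\<^sub>M M)"
  unfolding bulk_def by measurable

lemma tail_measurable[measurable]: "tail L \<in> borel_measurable (P \<Otimes>\<^sub>M M)"
  unfolding tail_def by measurable

lemma tail_mass_measurable[measurable]: "tail_mass L \<in> borel_measurable P"
  unfolding tail_mass_def by measurable

lemma bulk_plus_tail: "bulk L z + tail L z = H z"
  by (simp add: bulk_def tail_def)

lemma bulk_bounds: "0 \<le> L \<Longrightarrow> 0 \<le> bulk L z \<and> bulk L z \<le> L"
  using H_nonneg[of z] by (simp add: bulk_def)

lemma tail_nonneg: "0 \<le> tail L z"
  using H_nonneg[of z] by (simp add: tail_def)

lemma tail_mass_nonneg: "0 \<le> tail_mass L \<omega>"
  unfolding tail_mass_def by (simp add: tail_nonneg)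

lemma integrable_tail: "\<omega> \<in> G \<Longrightarrow> integrable M (\<lambda>x. tail L (\<omega>, x))"
  using G_subset_space tail_nonneg H_nonneg
  by (intro Bochner_Integration.integrable_bound[OF integrable_H] AE_I2) (auto simp: tail_def)

lemma integrable_bulk: "\<omega> \<in> space P \<Longrightarrow> 0 \<le> L \<Longrightarrow> integrable M (\<lambda>x. bulk L (\<omega>, x))"
  using bulk_bounds by (intro M.integrable_const_bound[where B=L] AE_I2) auto

lemma tail_mass_ln_le_KL_div:
  assumes "\<omega> \<in> G" "1 < L"
  shows "ennreal (tail_mass L \<omega> * ln L) \<le> KL_div (K \<omega>) M + 1"
  using tail_integral_ln_le_KL_div[OF M_prob _ H_nonneg integrable_H[OF assms(1)] assms(2)]
    assms G_subset_space
  by (auto simp: tail_mass_def tail_def K_density)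

definition tail_mass_on :: "real \<Rightarrow> 'b \<Rightarrow> 'a set \<Rightarrow> real" where
  "tail_mass_on L \<omega> A = (\<integral>x. indicator A x * tail L (\<omega>, x) \<partial>M)"

lemma tail_mass_on_measurable[measurable]:
  assumes [measurable]: "A \<in> sets M"
  shows "(\<lambda>\<omega>. tail_mass_on L \<omega> A) \<in> borel_measurable P"
  unfolding tail_mass_on_def by measurable

lemma tail_mass_on_nonneg: "0 \<le> tail_mass_on L \<omega> A"
  unfolding tail_mass_on_def by (intro integral_nonneg_AE AE_I2) (simp add: tail_nonneg)

lemma tail_mass_on_le:
  assumes "\<omega> \<in> G" "A \<in> sets M"
  shows "tail_mass_on L \<omega> A \<le> tail_mass L \<omega>"
proof -
  have "integrable M (\<lambda>x. indicator A x * tail L (\<omega>, x))"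
    using integrable_real_mult_indicator[OF assms(2) integrable_tail[OF assms(1)]] by (simp add: mult.commute)
  then show ?thesis
    unfolding tail_mass_on_def tail_mass_def using integrable_tail[OF assms(1)] tail_nonneg
    by (intro integral_mono) (auto split: split_indicator)
qed

lemma partition_additive_tail_mass_on:
  "\<omega> \<in> G \<Longrightarrow> partition_additive M (tail_mass_on L \<omega>) (tail_mass L \<omega>)"
  unfolding tail_mass_on_def tail_mass_def
  by (rule partition_additive_set_integral[OF integrable_tail])

lemma measure_K_split:
  assumes "\<omega> \<in> G" "0 \<le> L" "A \<in> sets M"
  shows "measure (K \<omega>) A = (\<integral>x. indicator A x * bulk L (\<omega>, x) \<partial>M) + tail_mass_on L \<omega> A"
proof -
  have \<omega>: "\<omega> \<in> space P" using assms(1) G_subset_space by auto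
  have "measure (K \<omega>) A = (\<integral>x. indicator A x * bulk L (\<omega>, x) + indicator A x * tail L (\<omega>, x) \<partial>M)"
    unfolding measure_K_eq_set_integral[OF assms(1,3)]
    by (intro Bochner_Integration.integral_cong) (simp_all add: distrib_left[symmetric] bulk_plus_tail)
  also have "\<dots> = (\<integral>x. indicator A x * bulk L (\<omega>, x) \<partial>M) + tail_mass_on L \<omega> A"
    unfolding tail_mass_on_def
    using integrable_real_mult_indicator[OF assms(3) integrable_bulk[OF \<omega> assms(2)]]
      integrable_real_mult_indicator[OF assms(3) integrable_tail[OF assms(1)]]
    by (subst Bochner_Integration.integral_add) (auto simp: mult.commute)
  finally show ?thesis .
qed

lemma set_integral_tail_mass_bound:
  assumes S: "S \<in> sets P" "S \<subseteq> G" and L: "1 < L" and KL: "(\<integral>\<^sup>+\<omega>. KL_div (K \<omega>) M \<partial>P) < \<top>"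
  shows "integrable P (\<lambda>\<omega>. indicator S \<omega> * tail_mass L \<omega>)"
    and "(\<integral>\<omega>. indicator S \<omega> * tail_mass L \<omega> \<partial>P) * ln L \<le> enn2real (\<integral>\<^sup>+\<omega>. KL_div (K \<omega>) M \<partial>P) + 1"
proof -
  define I where "I = enn2real (\<integral>\<^sup>+\<omega>. KL_div (K \<omega>) M \<partial>P)"
  have I: "(\<integral>\<^sup>+\<omega>. KL_div (K \<omega>) M \<partial>P) = ennreal I" "0 \<le> I" using KL by (auto simp: I_def)
  define \<phi> where "\<phi> \<omega> = ennreal (indicator S \<omega> * tail_mass L \<omega> * ln L)" for \<omega>
  have \<phi>_measurable[measurable]: "\<phi> \<in> borel_measurable P" unfolding \<phi>_def using S by measurable
  have "\<phi> \<omega> \<le> KL_div (K \<omega>) M + 1" for \<omega>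
    using tail_mass_ln_le_KL_div[OF _ L] S(2) by (auto simp: \<phi>_def split: split_indicator)
  then have "(\<integral>\<^sup>+\<omega>. \<phi> \<omega> \<partial>P) \<le> (\<integral>\<^sup>+\<omega>. KL_div (K \<omega>) M \<partial>P) + 1"
    by (rule nn_integral_le_add_one[OF P_prob \<phi>_measurable])
  then have \<phi>_int: "(\<integral>\<^sup>+\<omega>. \<phi> \<omega> \<partial>P) \<le> ennreal (I + 1)"
    using I by (simp add: ennreal_plus)
  have nonneg: "0 \<le> indicator S \<omega> * tail_mass L \<omega> * ln L" for \<omega>
    using L by (simp add: tail_mass_nonneg)
  have "(\<integral>\<^sup>+\<omega>. \<phi> \<omega> \<partial>P) < \<top>"
    using \<phi>_int by (rule le_less_trans) simp
  then have int: "integrable P (\<lambda>\<omega>. indicator S \<omega> * tail_mass L \<omega> * ln L)"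
    using nonneg S by (intro integrableI_nonneg) (auto simp: \<phi>_def)
  then show "integrable P (\<lambda>\<omega>. indicator S \<omega> * tail_mass L \<omega>)"
    using integrable_divide_zero[OF int, of "ln L"] L by simp
  have "ennreal ((\<integral>\<omega>. indicator S \<omega> * tail_mass L \<omega> \<partial>P) * ln L) = (\<integral>\<^sup>+\<omega>. \<phi> \<omega> \<partial>P)"
    unfolding \<phi>_def using int nonneg by (subst nn_integral_eq_integral) auto
  with \<phi>_int have "ennreal ((\<integral>\<omega>. indicator S \<omega> * tail_mass L \<omega> \<partial>P) * ln L) \<le> ennreal (I + 1)"
    by simp
  then show "(\<integral>\<omega>. indicator S \<omega> * tail_mass L \<omega> \<partial>P) * ln L \<le> enn2real (\<integral>\<^sup>+\<omega>. KL_div (K \<omega>) M \<partial>P) + 1"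
    using I(2) unfolding I_def[symmetric] by (subst (asm) ennreal_le_iff) auto
qed

end

section \<open>Conditioning on a set of good parameters\<close>

locale conditioned_kernel_density = kernel_density +
  fixes S
  assumes S_sets[measurable]: "S \<in> sets P" and S_subset_G: "S \<subseteq> G" and S_pos: "0 < measure P S"
begin

definition Q where
  "Q = uniform_measure P S"

lemma sets_Q[measurable_cong]: "sets Q = sets P"
  by (simp add: Q_def)

lemma space_Q: "space Q = space P"
  by (simp add: Q_def)

sublocale Q: prob_space Q
  unfolding Q_def using S_pos by (intro prob_space_uniform_measure) (auto simp: P.emeasure_eq_measure)

sublocale QM: pair_prob_space Q M ..

lemma AE_Q_in_S: "AE \<omega> in Q. \<omega> \<in> S"
  unfolding Q_def by (intro AE_uniform_measureI) auto

lemma Q_density: "Q = density P (\<lambda>\<omega>. ennreal (indicator S \<omega> / measure P S))"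
proof -
  have "1 / ennreal (measure P S) = ennreal (1 / measure P S)"
    using divide_ennreal[of 1 "measure P S"] S_pos by simp
  then show ?thesis
    unfolding Q_def uniform_measure_def P.emeasure_eq_measure
    by (intro density_cong) (auto split: split_indicator)
qed

lemma integral_Q:
  fixes f :: "_ \<Rightarrow> real"
  assumes [measurable]: "f \<in> borel_measurable P"
  shows "(\<integral>\<omega>. f \<omega> \<partial>Q) = (\<integral>\<omega>. indicator S \<omega> * f \<omega> \<partial>P) / measure P S"
  unfolding Q_density using S_pos by (subst integral_density) auto

lemma integrable_Q_iff:
  fixes f :: "_ \<Rightarrow> real"
  assumes [measurable]: "f \<in> borel_measurable P"
  shows "integrable Q f \<longleftrightarrow> integrable P (\<lambda>\<omega>. indicator S \<omega> * f \<omega>)"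
proof -
  have "integrable Q f \<longleftrightarrow> integrable P (\<lambda>\<omega>. (indicator S \<omega> / measure P S) *\<^sub>R f \<omega>)"
    unfolding Q_density using S_pos by (intro integrable_density) auto
  also have "\<dots> \<longleftrightarrow> integrable P (\<lambda>\<omega>. (indicator S \<omega> * f \<omega>) * inverse (measure P S))"
    by (simp add: field_simps)
  finally show ?thesis using S_pos by simp
qed

lemma tail_expectation_bound:
  assumes "1 < L" and "(\<integral>\<^sup>+\<omega>. KL_div (K \<omega>) M \<partial>P) < \<top>"
  shows "integrable Q (tail_mass L)"
    and "measure P S * (\<integral>\<omega>. tail_mass L \<omega> \<partial>Q) * ln L \<le> enn2real (\<integral>\<^sup>+\<omega>. KL_div (K \<omega>) M \<partial>P) + 1"
  using set_integral_tail_mass_bound[OF S_sets S_subset_G assms] S_pos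
  by (simp_all add: integrable_Q_iff integral_Q)

definition mean_bulk :: "real \<Rightarrow> _ \<Rightarrow> real" where
  "mean_bulk L x = (\<integral>\<omega>. bulk L (\<omega>, x) \<partial>Q)"

lemma mean_bulk_measurable[measurable]: "mean_bulk L \<in> borel_measurable M"
  unfolding mean_bulk_def by measurable

lemma mean_bulk_bounds:
  assumes "0 \<le> L"
  shows "0 \<le> mean_bulk L x \<and> mean_bulk L x \<le> L"
proof (cases "integrable Q (\<lambda>\<omega>. bulk L (\<omega>, x))")
  case True
  then show ?thesis
    using bulk_bounds[OF assms] Q.integral_le_const[of "\<lambda>\<omega>. bulk L (\<omega>, x)" L]
    by (auto simp: mean_bulk_def intro!: integral_nonneg_AE)
qed (simp add: mean_bulk_def not_integrable_integral_eq assms)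

lemma integrable_mean_bulk: "0 \<le> L \<Longrightarrow> integrable M (mean_bulk L)"
  using mean_bulk_bounds by (intro M.integrable_const_bound[where B=L] AE_I2) auto

lemma measure_M_split:
  assumes A[measurable]: "A \<in> sets M"
  shows "measure M A = measure P S * (\<integral>\<omega>. measure (K \<omega>) A \<partial>Q)
    + (\<integral>\<omega>. indicator (space P - S) \<omega> * measure (K \<omega>) A \<partial>P)"
proof -
  have int: "integrable P (\<lambda>\<omega>. indicator T \<omega> * measure (K \<omega>) A)" if "T \<in> sets P" for T
    using integrable_real_mult_indicator[OF that integrable_measure_K[OF P.finite_measure_axioms refl A]]
    by (simp add: mult.commute)
  have "measure M A = (\<integral>\<omega>. indicator S \<omega> * measure (K \<omega>) A
      + indicator (space P - S) \<omega> * measure (K \<omega>) A \<partial>P)"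
    unfolding measure_M_eq_integral[OF A]
    by (intro Bochner_Integration.integral_cong) (auto split: split_indicator)
  also have "\<dots> = (\<integral>\<omega>. indicator S \<omega> * measure (K \<omega>) A \<partial>P)
      + (\<integral>\<omega>. indicator (space P - S) \<omega> * measure (K \<omega>) A \<partial>P)"
    using int[of S] int[of "space P - S"] by simp
  also have "(\<integral>\<omega>. indicator S \<omega> * measure (K \<omega>) A \<partial>P) = measure P S * (\<integral>\<omega>. measure (K \<omega>) A \<partial>Q)"
    using S_pos by (simp add: integral_Q)
  finally show ?thesis .
qed

lemma integrable_tail_mass_on_Q:
  assumes "integrable Q (tail_mass L)" "A \<in> sets M"
  shows "integrable Q (\<lambda>\<omega>. tail_mass_on L \<omega> A)"
proof (rule Bochner_Integration.integrable_bound[OF assms(1)])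
  show "AE \<omega> in Q. norm (tail_mass_on L \<omega> A) \<le> norm (tail_mass L \<omega>)"
    using AE_Q_in_S
    by eventually_elim
      (use S_subset_G assms(2) in \<open>auto simp: tail_mass_on_nonneg tail_mass_on_le abs_of_nonneg[OF tail_mass_nonneg]\<close>)
qed (use assms(2) in measurable)

lemma partition_additive_tail_mass_on_Q:
  assumes "integrable Q (tail_mass L)"
  shows "partition_additive M (\<lambda>A. \<integral>\<eta>. tail_mass_on L \<eta> A \<partial>Q) (\<integral>\<eta>. tail_mass L \<eta> \<partial>Q)"
  using AE_Q_in_S S_subset_G
  by (intro partition_additive_integral integrable_tail_mass_on_Q[OF assms])
    (auto elim!: eventually_mono intro: partition_additive_tail_mass_on)

lemma integral_measure_K_Q:
  assumes L: "0 \<le> L" and tail: "integrable Q (tail_mass L)" and A[measurable]: "A \<in> sets M"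
  shows "(\<integral>\<omega>. measure (K \<omega>) A \<partial>Q)
    = (\<integral>x. indicator A x * mean_bulk L x \<partial>M) + (\<integral>\<omega>. tail_mass_on L \<omega> A \<partial>Q)"
proof -
  define bulk_on where "bulk_on \<omega> = (\<integral>x. indicator A x * bulk L (\<omega>, x) \<partial>M)" for \<omega>
  have bulk_on_integrable: "integrable Q bulk_on"
  proof -
    have "\<bar>bulk_on \<omega>\<bar> \<le> L" for \<omega>
    proof -
      have "\<bar>bulk_on \<omega>\<bar> \<le> (\<integral>x. \<bar>indicator A x * bulk L (\<omega>, x)\<bar> \<partial>M)"
        unfolding bulk_on_def by (rule integral_abs_bound)
      also have "\<dots> \<le> (\<integral>x. L \<partial>M)"
        using bulk_bounds[OF L] L by (intro integral_mono_AE' AE_I2) (auto split: split_indicator)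
      finally show ?thesis by (simp add: M.prob_space)
    qed
    moreover have "bulk_on \<in> borel_measurable Q" unfolding bulk_on_def by measurable
    ultimately show ?thesis by (intro Q.integrable_const_bound[where B=L] AE_I2) auto
  qed
  have "(\<integral>\<omega>. measure (K \<omega>) A \<partial>Q) = (\<integral>\<omega>. bulk_on \<omega> + tail_mass_on L \<omega> A \<partial>Q)"
    using AE_Q_in_S S_subset_G
    by (intro integral_cong_AE) (auto elim!: eventually_mono simp: measure_K_split[OF _ L A] bulk_on_def)
  also have "\<dots> = (\<integral>\<omega>. bulk_on \<omega> \<partial>Q) + (\<integral>\<omega>. tail_mass_on L \<omega> A \<partial>Q)"
    using bulk_on_integrable integrable_tail_mass_on_Q[OF tail A] by simp
  also have "(\<integral>\<omega>. bulk_on \<omega> \<partial>Q) = (\<integral>x. indicator A x * mean_bulk L x \<partial>M)"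
  proof -
    have "integrable (Q \<Otimes>\<^sub>M M) (\<lambda>(\<omega>, x). indicator A x * bulk L (\<omega>, x))"
      using bulk_bounds[OF L] L
      by (intro QM.P.integrable_const_bound[where B=L] AE_I2) (auto split: split_indicator)
    from QM.Fubini_integral[OF this] show ?thesis
      unfolding bulk_on_def mean_bulk_def by simp
  qed
  finally show ?thesis .
qed

lemma measure_average_minus_M:
  assumes L: "0 \<le> L" and tail: "integrable Q (tail_mass L)" and m: "0 < m"
    and \<omega>: "\<And>j. j \<in> {1..m} \<Longrightarrow> \<omega> j \<in> S" and A[measurable]: "A \<in> sets M"
  defines "D x \<equiv> (1 / real m) * (\<Sum>j=1..m. bulk L (\<omega> j, x) - mean_bulk L x)"
  shows "(1 / real m) * (\<Sum>j=1..m. measure (K (\<omega> j)) A) - measure M A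
    = (\<integral>x. indicator A x * D x \<partial>M) + (1 / real m) * (\<Sum>j=1..m. tail_mass_on L (\<omega> j) A)
      - (\<integral>\<eta>. tail_mass_on L \<eta> A \<partial>Q) + (1 - measure P S) * (\<integral>\<eta>. measure (K \<eta>) A \<partial>Q)
      - (\<integral>\<eta>. indicator (space P - S) \<eta> * measure (K \<eta>) A \<partial>P)"
proof -
  have \<omega>G: "\<omega> j \<in> G" "\<omega> j \<in> space P" if "j \<in> {1..m}" for j
    using \<omega>[OF that] S_subset_G G_subset_space by auto
  define b where "b j = (\<integral>x. indicator A x * bulk L (\<omega> j, x) \<partial>M)" for j
  define g where "g = (\<integral>x. indicator A x * mean_bulk L x \<partial>M)"
  have int_b: "integrable M (\<lambda>x. indicator A x * bulk L (\<omega> j, x))" if "j \<in> {1..m}" for j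
    using integrable_real_mult_indicator[OF A integrable_bulk[OF \<omega>G(2)[OF that] L]] by (simp add: mult.commute)
  have int_g: "integrable M (\<lambda>x. indicator A x * mean_bulk L x)"
    using integrable_real_mult_indicator[OF A integrable_mean_bulk[OF L]] by (simp add: mult.commute)
  have "(\<integral>x. indicator A x * D x \<partial>M)
      = (\<integral>x. (1 / real m) * (\<Sum>j=1..m. indicator A x * bulk L (\<omega> j, x) - indicator A x * mean_bulk L x) \<partial>M)"
    unfolding D_def by (intro Bochner_Integration.integral_cong) (simp_all add: sum_distrib_left algebra_simps)
  also have "\<dots> = (1 / real m) * (\<Sum>j=1..m. b j - g)"
    using int_b int_g by (simp add: b_def g_def)
  finally have D: "(\<integral>x. indicator A x * D x \<partial>M) = (1 / real m) * (\<Sum>j=1..m. b j) - g"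
    using m by (simp add: sum_subtractf right_diff_distrib)
  have K: "(\<Sum>j=1..m. measure (K (\<omega> j)) A) = (\<Sum>j=1..m. b j) + (\<Sum>j=1..m. tail_mass_on L (\<omega> j) A)"
    unfolding sum.distrib[symmetric] b_def using \<omega>G by (intro sum.cong refl measure_K_split L A) auto
  show ?thesis
    unfolding D K measure_M_split[OF A] integral_measure_K_Q[OF L tail A] g_def[symmetric]
    by (simp add: algebra_simps)
qed

lemma tv_norm_average_le:
  assumes L: "0 \<le> L" and tail: "integrable Q (tail_mass L)" and m: "0 < m"
    and \<omega>: "\<And>j. j \<in> {1..m} \<Longrightarrow> \<omega> j \<in> S"
  defines "D x \<equiv> (1 / real m) * (\<Sum>j=1..m. bulk L (\<omega> j, x) - mean_bulk L x)"
  shows "tv_norm M (\<lambda>A. (1 / real m) * (\<Sum>j=1..m. measure (K (\<omega> j)) A) - measure M A)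
    \<le> (\<integral>x. \<bar>D x\<bar> \<partial>M) + (1 / real m) * (\<Sum>j=1..m. tail_mass L (\<omega> j))
      + (\<integral>\<eta>. tail_mass L \<eta> \<partial>Q) + 2 * (1 - measure P S)"
proof (rule tv_norm_le_partition_additive)
  have \<omega>G: "\<omega> j \<in> G" "\<omega> j \<in> space P" if "j \<in> {1..m}" for j
    using \<omega>[OF that] S_subset_G G_subset_space by auto
  have D_integrable: "integrable M D"
    unfolding D_def using \<omega>G integrable_bulk[OF _ L] integrable_mean_bulk[OF L]
    by (intro integrable_mult_right Bochner_Integration.integrable_sum Bochner_Integration.integrable_diff) auto
  define \<beta> where "\<beta> A = (\<integral>x. indicator A x * \<bar>D x\<bar> \<partial>M) + (1 / real m) * (\<Sum>j=1..m. tail_mass_on L (\<omega> j) A)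
      + (\<integral>\<eta>. tail_mass_on L \<eta> A \<partial>Q) + (1 - measure P S) * (\<integral>\<eta>. measure (K \<eta>) A \<partial>Q)
      + (\<integral>\<eta>. indicator (space P - S) \<eta> * measure (K \<eta>) A \<partial>P)" for A
  show "\<bar>(1 / real m) * (\<Sum>j=1..m. measure (K (\<omega> j)) A) - measure M A\<bar> \<le> \<beta> A" if A: "A \<in> sets M" for A
  proof -
    have "\<bar>\<integral>x. indicator A x * D x \<partial>M\<bar> \<le> (\<integral>x. indicator A x * \<bar>D x\<bar> \<partial>M)"
      using integral_abs_bound[of M "\<lambda>x. indicator A x * D x"] by (simp add: abs_mult)
    moreover have "0 \<le> (1 / real m) * (\<Sum>j=1..m. tail_mass_on L (\<omega> j) A)"
      by (simp add: sum_nonneg tail_mass_on_nonneg)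
    moreover have "0 \<le> (\<integral>\<eta>. tail_mass_on L \<eta> A \<partial>Q)"
      by (simp add: tail_mass_on_nonneg)
    moreover have "0 \<le> (1 - measure P S) * (\<integral>\<eta>. measure (K \<eta>) A \<partial>Q)"
      by (simp add: P.prob_le_1)
    moreover have "0 \<le> (\<integral>\<eta>. indicator (space P - S) \<eta> * measure (K \<eta>) A \<partial>P)"
      by (simp add: integral_nonneg_AE)
    ultimately show ?thesis
      using measure_average_minus_M[where \<omega>=\<omega>, OF L tail m \<omega> A] unfolding \<beta>_def D_def by linarith
  qed
  note partition_additive_tail_mass_on_Q[OF tail]
    partition_additive_integral_measure_K[OF Q.finite_measure_axioms sets_Q]
    partition_additive_set_integral_measure_K[of "space P - S"]
  then have "partition_additive M \<beta>
      ((\<integral>x. \<bar>D x\<bar> \<partial>M) + (1 / real m) * (\<Sum>j=1..m. tail_mass L (\<omega> j))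
        + (\<integral>\<eta>. tail_mass L \<eta> \<partial>Q) + (1 - measure P S) * measure Q (space Q) + measure P (space P - S))"
    unfolding \<beta>_def using D_integrable \<omega>G
    by (intro partition_additive_add partition_additive_cmult partition_additive_sum
        partition_additive_set_integral partition_additive_tail_mass_on) auto
  then show "partition_additive M \<beta> ((\<integral>x. \<bar>D x\<bar> \<partial>M) + (1 / real m) * (\<Sum>j=1..m. tail_mass L (\<omega> j))
      + (\<integral>\<eta>. tail_mass L \<eta> \<partial>Q) + 2 * (1 - measure P S))"
    by (simp add: P.prob_compl Q.prob_space algebra_simps)
qed

lemma exists_greedy_sample:
  assumes L: "0 \<le> L" and tail: "integrable Q (tail_mass L)"
  shows "\<exists>\<omega>. (\<forall>j\<in>{1..m}. \<omega> j \<in> S) \<and>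
    (\<integral>x. (\<Sum>j=1..m. bulk L (\<omega> j, x) - mean_bulk L x)\<^sup>2 \<partial>M) + c * (\<Sum>j=1..m. tail_mass L (\<omega> j))
      \<le> real m * (L\<^sup>2 + c * (\<integral>\<eta>. tail_mass L \<eta> \<partial>Q))"
proof -
  define f where "f \<eta> x = bulk L (\<eta>, x) - mean_bulk L x" for \<eta> x
  have f_measurable: "(\<lambda>z. f (fst z) (snd z)) \<in> borel_measurable (Q \<Otimes>\<^sub>M M)"
    unfolding f_def by measurable
  have f_bounded: "\<bar>f \<eta> x\<bar> \<le> L" for \<eta> x
    using bulk_bounds[OF L, of "(\<eta>, x)"] mean_bulk_bounds[OF L, of x] by (auto simp: f_def)
  have f_centered: "(\<integral>\<eta>. f \<eta> x \<partial>Q) = 0" if "x \<in> space M" for x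
  proof -
    have "integrable Q (\<lambda>\<eta>. bulk L (\<eta>, x))"
      using that bulk_bounds[OF L] by (intro Q.integrable_const_bound[where B=L] AE_I2) auto
    then show ?thesis by (simp add: f_def mean_bulk_def Q.prob_space)
  qed
  have "S \<subseteq> space Q" using sets.sets_into_space[OF S_sets] by (simp add: space_Q)
  from greedy_selection[OF Q.prob_space_axioms M_prob f_measurable f_bounded f_centered tail AE_Q_in_S this]
  show ?thesis unfolding f_def by blast
qed

lemma greedy_bound_consequences:
  fixes m c a X T Y :: real
  assumes m: "0 < m" and c: "0 < c" and T: "0 \<le> T" and a: "a\<^sup>2 \<le> X"
    and greedy: "m\<^sup>2 * X + c * T \<le> m * Y"
  shows "a \<le> sqrt (Y / m)" and "T / m \<le> Y / c"
proof -
  have "m\<^sup>2 * a\<^sup>2 \<le> m\<^sup>2 * X" using a by (rule mult_left_mono) simp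
  moreover have "0 \<le> c * T" using c T by simp
  ultimately have "m * (m * a\<^sup>2) \<le> m * Y" using greedy by (simp add: power2_eq_square[of m] mult.assoc)
  then have "m * a\<^sup>2 \<le> Y" using m by (rule mult_left_le_imp_le)
  then have "a\<^sup>2 \<le> Y / m" using m by (simp add: field_simps)
  then show "a \<le> sqrt (Y / m)" by (rule real_le_rsqrt)
  have "0 \<le> m\<^sup>2 * X" using a order_trans[OF zero_le_power2 a] by simp
  with greedy have "c * T \<le> m * Y" by linarith
  then show "T / m \<le> Y / c" using m c by (simp add: field_simps)
qed

lemma exists_good_average:
  assumes L: "0 \<le> L" and tail: "integrable Q (tail_mass L)" and c: "0 < c" and m: "0 < m"
  shows "\<exists>\<omega>. (\<forall>j\<in>{1..m}. \<omega> j \<in> S) \<and>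
    tv_norm M (\<lambda>A. (1 / real m) * (\<Sum>j=1..m. measure (K (\<omega> j)) A) - measure M A)
      \<le> sqrt ((L\<^sup>2 + c * (\<integral>\<eta>. tail_mass L \<eta> \<partial>Q)) / m) + (L\<^sup>2 / c + (\<integral>\<eta>. tail_mass L \<eta> \<partial>Q))
        + (\<integral>\<eta>. tail_mass L \<eta> \<partial>Q) + 2 * (1 - measure P S)"
proof -
  define E where "E = (\<integral>\<eta>. tail_mass L \<eta> \<partial>Q)"
  obtain \<omega> where \<omega>: "\<forall>j\<in>{1..m}. \<omega> j \<in> S" and greedy:
      "(\<integral>x. (\<Sum>j=1..m. bulk L (\<omega> j, x) - mean_bulk L x)\<^sup>2 \<partial>M) + c * (\<Sum>j=1..m. tail_mass L (\<omega> j))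
        \<le> real m * (L\<^sup>2 + c * E)"
    using exists_greedy_sample[OF L tail] unfolding E_def by blast
  define D where "D x = (1 / real m) * (\<Sum>j=1..m. bulk L (\<omega> j, x) - mean_bulk L x)" for x
  define T where "T = (\<Sum>j=1..m. tail_mass L (\<omega> j))"
  have "(\<lambda>x. bulk L (\<omega> j, x)) \<in> borel_measurable M" if "j \<in> {1..m}" for j
    using \<omega> that S_subset_G G_subset_space by (intro borel_measurable_integrable integrable_bulk L) blast
  then have D_measurable: "D \<in> borel_measurable M"
    unfolding D_def by (intro borel_measurable_times borel_measurable_const borel_measurable_sum
        borel_measurable_diff mean_bulk_measurable)
  have D_bounded: "\<bar>D x\<bar> \<le> L" for x
  proof -
    have "\<bar>bulk L (\<omega> j, x) - mean_bulk L x\<bar> \<le> L" for j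
      using bulk_bounds[OF L, of "(\<omega> j, x)"] mean_bulk_bounds[OF L, of x] by auto
    then have "\<bar>\<Sum>j=1..m. bulk L (\<omega> j, x) - mean_bulk L x\<bar> \<le> (\<Sum>j=1..m. L)"
      by (intro order_trans[OF sum_abs sum_mono])
    then show ?thesis using m by (simp add: D_def abs_mult field_simps)
  qed
  have "(\<Sum>j=1..m. bulk L (\<omega> j, x) - mean_bulk L x) = real m * D x" for x
    using m by (simp add: D_def)
  with greedy have "(real m)\<^sup>2 * (\<integral>x. (D x)\<^sup>2 \<partial>M) + c * T \<le> real m * (L\<^sup>2 + c * E)"
    by (simp add: T_def power_mult_distrib)
  moreover have "(\<integral>x. \<bar>D x\<bar> \<partial>M)\<^sup>2 \<le> (\<integral>x. (D x)\<^sup>2 \<partial>M)"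
    using D_measurable D_bounded
    by (intro square_integral_abs_le_integral_square M_prob integrable_bounded_square
        M.integrable_const_bound[where B=L] AE_I2) (auto simp: M.finite_measure_axioms)
  moreover have "0 \<le> T" unfolding T_def by (simp add: sum_nonneg tail_mass_nonneg)
  ultimately have "(\<integral>x. \<bar>D x\<bar> \<partial>M) \<le> sqrt ((L\<^sup>2 + c * E) / m)" and "T / m \<le> (L\<^sup>2 + c * E) / c"
    using greedy_bound_consequences[of m c T "\<integral>x. \<bar>D x\<bar> \<partial>M"] m c by auto
  moreover have "tv_norm M (\<lambda>A. (1 / real m) * (\<Sum>j=1..m. measure (K (\<omega> j)) A) - measure M A)
      \<le> (\<integral>x. \<bar>D x\<bar> \<partial>M) + T / m + E + 2 * (1 - measure P S)"
    using tv_norm_average_le[OF L tail m, of \<omega>] \<omega> unfolding D_def T_def E_def by simp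
  moreover have "(L\<^sup>2 + c * E) / c = L\<^sup>2 / c + E" using c by (simp add: field_simps)
  ultimately show ?thesis using \<omega> unfolding E_def by fastforce
qed

end

lemma kernel_density_of_finite_KL:
  fixes M :: "'a::second_countable_topology measure" and P :: "'b measure" and K :: "'b \<Rightarrow> 'a measure"
  assumes M_borel: "sets M = sets borel" and P_prob: "prob_space P" and M_prob: "prob_space M"
    and K_kernel: "K \<in> P \<rightarrow>\<^sub>M prob_algebra M" and M_mix: "M = P \<bind> K"
    and I_fin: "(\<integral>\<^sup>+ \<omega>. KL_div (K \<omega>) M \<partial>P) < \<top>"
  obtains H G where "kernel_density P M K H G"
proof -
  obtain H G where "H \<in> borel_measurable (P \<Otimes>\<^sub>M M)" "\<And>z. 0 \<le> H z" "G \<in> sets P" "emeasure P G = 1"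
    "\<And>\<omega>. \<omega> \<in> G \<Longrightarrow> K \<omega> = density M (\<lambda>x. ennreal (H (\<omega>, x)))"
    using kernel_density_exists[OF M_borel P_prob M_prob K_kernel
        AE_kernel_null_section_of_finite_KL[OF M_prob K_kernel I_fin]] by blast
  with P_prob M_prob K_kernel M_mix have "kernel_density P M K H G"
    unfolding kernel_density_def by blast
  then show thesis by (rule that)
qed

lemma sampling_bound_arithmetic:
  fixes \<epsilon> p I E L2 m :: real
  assumes eps: "0 < \<epsilon>" "\<epsilon> < 1/2" and p: "1 - \<epsilon>/2 < p" "p \<le> 1" and I: "0 \<le> I" and E: "0 \<le> E"
    and tail: "p * E * (8 * (I + 1) / \<epsilon>) \<le> I + 1" and L2: "0 < L2" and m: "16 / \<epsilon>\<^sup>2 * L2 \<le> m"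
  shows "sqrt ((L2 + 6 * L2 / \<epsilon> * E) / m) + (L2 / (6 * L2 / \<epsilon>) + E) + E + 2 * (1 - p) < 3 * \<epsilon>"
proof -
  have p34: "3/4 < p" using p eps by simp
  have "(p * E * 8 / \<epsilon>) * (I + 1) \<le> 1 * (I + 1)" using tail by (simp add: algebra_simps)
  then have "p * E * 8 / \<epsilon> \<le> 1" by (rule mult_right_le_imp_le) (use I in linarith)
  then have "E \<le> \<epsilon> / (8 * p)" using eps p34 by (simp add: field_simps)
  also have "\<dots> < \<epsilon> / 6" using eps p34 by (simp add: field_simps)
  finally have E6: "E < \<epsilon> / 6" .
  have m0: "0 < m" using m L2 eps by (smt (verit) divide_pos_pos mult_pos_pos zero_less_power)
  have Lm: "L2 / m \<le> \<epsilon>\<^sup>2 / 16" using m m0 eps by (simp add: field_simps)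
  have "(L2 + 6 * L2 / \<epsilon> * E) / m = (L2 / m) * (1 + 6 * E / \<epsilon>)"
    using eps m0 by (simp add: field_simps)
  also have "\<dots> \<le> (\<epsilon>\<^sup>2 / 16) * 2"
  proof (rule mult_mono)
    show "1 + 6 * E / \<epsilon> \<le> 2" using E6 eps by (simp add: field_simps)
  qed (use Lm L2 m0 E eps in auto)
  also have "\<dots> < (\<epsilon> / 2)\<^sup>2" using eps by (simp add: power_divide)
  finally have "sqrt ((L2 + 6 * L2 / \<epsilon> * E) / m) < sqrt ((\<epsilon> / 2)\<^sup>2)"
    by (rule real_sqrt_less_mono)
  then have "sqrt ((L2 + 6 * L2 / \<epsilon> * E) / m) < \<epsilon> / 2" using eps by simp
  moreover have "L2 / (6 * L2 / \<epsilon>) = \<epsilon> / 6" using L2 eps by (simp add: field_simps)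
  ultimately show ?thesis using E6 p by simp
qed

theorem proposition7p2:
  fixes M :: "'a::polish_space measure" and P :: "'b measure"
    and K :: "'b \<Rightarrow> 'a measure" and \<epsilon> :: real and \<Omega>1 :: "'b set"
  assumes M_borel: "sets M = sets borel"
    and M_prob: "prob_space M"
    and P_prob: "prob_space P"
    and K_kernel: "K \<in> P \<rightarrow>\<^sub>M prob_algebra M"
    and M_mix: "M = P \<bind> K"
    and eps: "0 < \<epsilon>" "\<epsilon> < 1/2"
    and \<Omega>1_meas: "\<Omega>1 \<in> sets P"
    and \<Omega>1_large: "measure P \<Omega>1 > 1 - \<epsilon>/2"
    and I_fin: "(\<integral>\<^sup>+ \<omega>. KL_div (K \<omega>) M \<partial>P) < \<top>"
  shows "let I = enn2real (\<integral>\<^sup>+ \<omega>. KL_div (K \<omega>) M \<partial>P);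
             m = nat \<lceil>16 / \<epsilon>\<^sup>2 * exp (16 * (I + 1) / \<epsilon>)\<rceil>
         in \<exists>\<omega>::nat \<Rightarrow> 'b. (\<forall>j\<in>{1..m}. \<omega> j \<in> \<Omega>1) \<and>
              tv_norm M (\<lambda>A. (1 / real m) * (\<Sum>j=1..m. measure (K (\<omega> j)) A) - measure M A)
                < 3 * \<epsilon>"
proof -
  obtain H G where "kernel_density P M K H G"
    using kernel_density_of_finite_KL[OF M_borel P_prob M_prob K_kernel M_mix I_fin] .
  then interpret kernel_density P M K H G .
  have "measure P \<Omega>1 \<le> measure P (\<Omega>1 \<inter> G) + measure P (space P - G)"
    using \<Omega>1_meas sets.sets_into_space[OF \<Omega>1_meas]
    by (intro order_trans[OF P.finite_measure_mono measure_Un_le]) auto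
  then have p: "1 - \<epsilon>/2 < measure P (\<Omega>1 \<inter> G)"
    using \<Omega>1_large G_full by (simp add: P.prob_compl P.emeasure_eq_measure)
  interpret conditioned_kernel_density P M K H G "\<Omega>1 \<inter> G"
    using \<Omega>1_meas p eps by unfold_locales auto
  define I where "I = enn2real (\<integral>\<^sup>+ \<omega>. KL_div (K \<omega>) M \<partial>P)"
  define L where "L = exp (8 * (I + 1) / \<epsilon>)"
  define m where "m = nat \<lceil>16 / \<epsilon>\<^sup>2 * exp (16 * (I + 1) / \<epsilon>)\<rceil>"
  have I: "0 \<le> I" by (simp add: I_def)
  then have L: "1 < L" and L2: "L\<^sup>2 = exp (16 * (I + 1) / \<epsilon>)"
    using eps by (auto simp: L_def power2_eq_square exp_add[symmetric])
  then have m: "16 / \<epsilon>\<^sup>2 * L\<^sup>2 \<le> real m" "0 < m"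
    using eps unfolding m_def by (auto intro: real_nat_ceiling_ge)
  note tail = tail_expectation_bound[OF L I_fin, folded I_def]
  define E where "E = (\<integral>\<eta>. tail_mass L \<eta> \<partial>Q)"
  define c where "c = 6 * L\<^sup>2 / \<epsilon>"
  obtain \<omega> where "\<forall>j\<in>{1..m}. \<omega> j \<in> \<Omega>1 \<inter> G"
    and "tv_norm M (\<lambda>A. (1 / real m) * (\<Sum>j=1..m. measure (K (\<omega> j)) A) - measure M A)
      \<le> sqrt ((L\<^sup>2 + c * E) / m) + (L\<^sup>2 / c + E) + E + 2 * (1 - measure P (\<Omega>1 \<inter> G))"
    using exists_good_average[OF _ tail(1), of c m] L eps m unfolding E_def c_def by auto
  moreover have "\<dots> < 3 * \<epsilon>"
    using tail(2) L eps p I m unfolding E_def c_def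
    by (intro sampling_bound_arithmetic) (auto simp: L_def tail_mass_nonneg)
  ultimately show ?thesis unfolding Let_def I_def[symmetric] m_def[symmetric] by auto
qed

end
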